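(* Let $f,g,\beta$ satisfy the standing assumptions below, and let $\{(x_k,y_k)\}$, $\eta_k$, $u_{x,k},u_{y,k},\xi_{x,k},\xi_{y,k}$, a set-valued map $\mathcal{D}$ and $\delta>0$ be such that $x_{k+1}=x_k-\eta_k(u_{x,k}+\xi_{x,k})$, $y_{k+1}=y_k-\eta_k(u_{y,k}+\xi_{y,k})$ and conditions (a)–(f) below hold. Let $\gamma:\mathbb{R}_+\to\mathbb{R}^n\times\mathbb{R}^p$ be any absolutely continuous path with $\gamma'(t)\in-\mathcal{D}(\gamma(t))$ for a.e. $t\in\mathbb{R}_+$. Then for every $t>0$, $h(\gamma(t))-h(\gamma(0))\le-\delta\int_0^t\mathrm{dist}(0,\mathcal{D}(\gamma(\tau)))^2\,d\tau$. (a) $\sup_k\|x_k\|+\|y_k\|<\infty$. (b) $\eta_k>0$, $\sum_k\eta_k=\infty$, $\sum_k\eta_k^2<\infty$. (c) $\sum_{k=0}^N\eta_k\xi_{x,k}$ and $\sum_{k=0}^N\eta_k\xi_{y,k}$ converge as $N\to\infty$. (d) $\mathcal{D}$ has closed graph and compact convex values, and for any unbounded increasing $\{k_j\}$ with $(x_{k_j},y_{k_j})\to(\tilde x,\tilde y)$, $\lim_N\mathrm{dist}(\frac1N\sum_{j=1}^N(u_{x,k_j},u_{y,k_j}),\mathcal{D}(\tilde x,\tilde y))=0$. (e) $\{h(x,y):0\in\mathcal{D}(x,y)\}$ has empty interior. (f) For all $(x,y)$ and $w\in\mathcal{D}(x,y)$, $\sup_{\zeta\in\mathcal{D}_h(x,y)}\zeta^\top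 w\ge\delta\|w\|^2$.
   Context: Standing assumptions. (A1) Constants $M_f,\mu,L_g,Q_g>0$ exist such that: $f:\mathbb{R}^n\times\mathbb{R}^p\to\mathbb{R}$ is $M_f$-Lipschitz; $g$ is twice differentiable with $\nabla^2_{yy}g\succeq\mu I_p$; $\nabla g$ is $L_g$-Lipschitz; $\nabla^2_{yy}g,\nabla^2_{xy}g$ are $Q_g$-Lipschitz; $\nabla^2_{yy}g$ is continuously differentiable ($\nabla^2_{xy}g\in\mathbb{R}^{n\times p}$ has entries $\partial^2g/\partial x_i\partial y_j$). (A2) $f$ is a potential function of a conservative field $\mathcal{D}_f$ with compact convex values of norm at most $M_f$ (conservative field: closed graph, nonempty compact values, $\int_0^1\max_{v\in\mathcal{D}(\gamma(t))}\langle\gamma'(t),v\rangle dt=0$ along every absolutely continuous loop; potential: $\phi(\gamma(1))-\phi(\gamma(0))$ equals this integral along any absolutely continuous curve). $\beta>0$. Notation: $H=\nabla^2_{yy}g(x,y)$; $\mathcal{A}(x,y):=y-H^{-1}\nabla_yg(x,y)$; $h(x,y):=f(x,\mathcal{A}(x,y))+\frac\beta2\|\nabla_yg(x,y)\|^2$; $\nabla^3_{xyy}g(x,y)[d]:=\lim_{t\to0}\frac1t(\nabla^2_{xy}g(x,y+td)-\nabla^2_{xy}g(x,y))$, $\nabla^3_{yyy}g(x,y)[d]:=\lim_{t\to0}\frac1t(\nabla^2_{yy}g(x,y+td)-\nabla^2_{yy}g(x,y))$; $J_{A,x}:=-\nabla^2_{xy}gH^{-1}+\nabla^3_{xyy}g[H^{-1}\nabla_yg]H^{-1}$,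 $J_{A,y}:=\nabla^3_{yyy}g[H^{-1}\nabla_yg]H^{-1}$; $\mathcal{D}_h(x,y):=\{(d_x+J_{A,x}d_y+\beta\nabla^2_{xy}g\nabla_yg,\ J_{A,y}d_y+\beta H\nabla_yg):(d_x,d_y)\in\mathcal{D}_f(x,\mathcal{A}(x,y))\}$, a conservative field admitting $h$ as potential. *)

theory Defs
  imports "HOL-Analysis.Analysis"
begin

definition abs_cont_on_interval :: "real \<Rightarrow> real \<Rightarrow> (real \<Rightarrow> 'a::real_normed_vector) \<Rightarrow> bool" where
  "abs_cont_on_interval a b \<gamma> \<longleftrightarrow>
     (\<forall>\<epsilon>>0. \<exists>d>0. \<forall>(m::nat) (s::nat \<Rightarrow> real) (t::nat \<Rightarrow> real).
        (\<forall>i<m. a \<le> s i \<and> s i \<le> t i \<and> t i \<le> b) \<and>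
        (\<forall>i<m. \<forall>j<m. i \<noteq> j \<longrightarrow> t i \<le> s j \<or> t j \<le> s i) \<and>
        (\<Sum>i<m. t i - s i) < d
        \<longrightarrow> (\<Sum>i<m. norm (\<gamma> (t i) - \<gamma> (s i))) < \<epsilon>)"

definition conservative_field :: "('a::euclidean_space \<Rightarrow> 'a set) \<Rightarrow> bool" where
  "conservative_field D \<longleftrightarrow>
     closed {(z, v). v \<in> D z} \<and>
     (\<forall>z. D z \<noteq> {} \<and> compact (D z)) \<and>
     (\<forall>\<gamma>. abs_cont_on_interval 0 1 \<gamma> \<and> \<gamma> 0 = \<gamma> 1 \<longrightarrow>
        ((\<lambda>t. Sup ((\<lambda>v. vector_derivative \<gamma> (at t) \<bullet> v) ` D (\<gamma> t))) has_integral 0) {0..1})"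

definition is_potential :: "('a::euclidean_space \<Rightarrow> real) \<Rightarrow> ('a \<Rightarrow> 'a set) \<Rightarrow> bool" where
  "is_potential \<phi> D \<longleftrightarrow>
     (\<forall>\<gamma>. abs_cont_on_interval 0 1 \<gamma> \<longrightarrow>
        ((\<lambda>t. Sup ((\<lambda>v. vector_derivative \<gamma> (at t) \<bullet> v) ` D (\<gamma> t))) has_integral
           (\<phi> (\<gamma> 1) - \<phi> (\<gamma> 0))) {0..1})"

text \<open>Directional derivative in the y-variable, defined as the limit of difference quotients
  (used for the third-order tensors nabla^3_{xyy} g [d] and nabla^3_{yyy} g [d]).\<close>
definition dir_deriv_y :: "('a::real_normed_vector \<times> 'b::real_normed_vector \<Rightarrow> 'c::real_normed_vector)
    \<Rightarrow> 'a \<times> 'b \<Rightarrow> 'b \<Rightarrow> 'c" where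
  "dir_deriv_y F z d = Lim (at (0::real)) (\<lambda>t. (1 / t) *\<^sub>R (F (fst z, snd z + t *\<^sub>R d) - F z))"

text \<open>Here Dg is the gradient of g (pair (nabla_x g, nabla_y g)), Hxy = nabla^2_{xy} g (n x p),
  Hyy = nabla^2_{yy} g (p x p).\<close>

definition Amap :: "((real^'n) \<times> (real^'p) \<Rightarrow> (real^'n) \<times> (real^'p)) \<Rightarrow> ((real^'n) \<times> (real^'p) \<Rightarrow> real^'p^'p)
    \<Rightarrow> (real^'n) \<times> (real^'p) \<Rightarrow> real^'p" where
  "Amap Dg Hyy z = snd z - matrix_inv (Hyy z) *v snd (Dg z)"

definition hfun :: "((real^'n) \<times> (real^'p) \<Rightarrow> real) \<Rightarrow> ((real^'n) \<times> (real^'p) \<Rightarrow> (real^'n) \<times> (real^'p))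
    \<Rightarrow> ((real^'n) \<times> (real^'p) \<Rightarrow> real^'p^'p) \<Rightarrow> real \<Rightarrow> (real^'n) \<times> (real^'p) \<Rightarrow> real" where
  "hfun f Dg Hyy \<beta> z = f (fst z, Amap Dg Hyy z) + \<beta> / 2 * (norm (snd (Dg z)))\<^sup>2"

definition JAx :: "((real^'n) \<times> (real^'p) \<Rightarrow> (real^'n) \<times> (real^'p)) \<Rightarrow> ((real^'n) \<times> (real^'p) \<Rightarrow> real^'p^'n)
    \<Rightarrow> ((real^'n) \<times> (real^'p) \<Rightarrow> real^'p^'p) \<Rightarrow> (real^'n) \<times> (real^'p) \<Rightarrow> real^'p^'n" where
  "JAx Dg Hxy Hyy z =
     - (Hxy z ** matrix_inv (Hyy z))
     + dir_deriv_y Hxy z (matrix_inv (Hyy z) *v snd (Dg z)) ** matrix_inv (Hyy z)"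

definition JAy :: "((real^'n) \<times> (real^'p) \<Rightarrow> (real^'n) \<times> (real^'p))
    \<Rightarrow> ((real^'n) \<times> (real^'p) \<Rightarrow> real^'p^'p) \<Rightarrow> (real^'n) \<times> (real^'p) \<Rightarrow> real^'p^'p" where
  "JAy Dg Hyy z = dir_deriv_y Hyy z (matrix_inv (Hyy z) *v snd (Dg z)) ** matrix_inv (Hyy z)"

definition Dh :: "((real^'n) \<times> (real^'p) \<Rightarrow> ((real^'n) \<times> (real^'p)) set)
    \<Rightarrow> ((real^'n) \<times> (real^'p) \<Rightarrow> (real^'n) \<times> (real^'p)) \<Rightarrow> ((real^'n) \<times> (real^'p) \<Rightarrow> real^'p^'n)
    \<Rightarrow> ((real^'n) \<times> (real^'p) \<Rightarrow> real^'p^'p) \<Rightarrow> real \<Rightarrow> (real^'n) \<times> (real^'p) \<Rightarrow> ((real^'n) \<times> (real^'p)) set" where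
  "Dh Df Dg Hxy Hyy \<beta> z =
     (\<lambda>(dx, dy). (dx + JAx Dg Hxy Hyy z *v dy + \<beta> *\<^sub>R (Hxy z *v snd (Dg z)),
                  JAy Dg Hyy z *v dy + \<beta> *\<^sub>R (Hyy z *v snd (Dg z))))
     ` Df (fst z, Amap Dg Hyy z)"

end

theory Submission
  imports Defs
begin

(* Write h = f o Phi + penalty with Phi (x, y) = (x, A (x, y)) and penalty = beta/2 |nabla_y g|^2.
   Phi is locally Lipschitz and differentiable, and the adjoint of its derivative is exactly the linear
   part of D_h; this uses the symmetry of the third derivatives of g, which follows from Peano's theorem
   on mixed partials because Hxy is only assumed Lipschitz. Running gamma backwards on [0, t], the
   potential property of f gives f (Phi (gamma 0)) - f (Phi (gamma t)) as the integral of
   sup { <DPhi (-gamma'), v> | v in D_f }, and the fundamental theorem of calculus for absolutely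
   continuous functions gives the penalty term. Hence h (gamma 0) - h (gamma t) is the integral of
   sup { <zeta, -gamma'> | zeta in D_h (gamma) }. Since -gamma' lies in D (gamma) almost everywhere,
   condition (f) bounds this integrand below by delta |gamma'|^2 >= delta dist (0, D (gamma))^2. *)

section \<open>Absolutely continuous functions\<close>

lemma abs_cont_on_intervalD:
  assumes "abs_cont_on_interval a b u" "\<epsilon> > 0"
  obtains d where "d > 0" "\<And>(m::nat) s t. \<forall>i<m. a \<le> s i \<and> s i \<le> t i \<and> t i \<le> b \<Longrightarrow>
      \<forall>i<m. \<forall>j<m. i \<noteq> j \<longrightarrow> t i \<le> s j \<or> t j \<le> s i \<Longrightarrow> (\<Sum>i<m. t i - s i) < d \<Longrightarrow>
      (\<Sum>i<m. norm (u (t i) - u (s i))) < \<epsilon>"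
proof -
  have "\<exists>d>0. \<forall>(m::nat) s t. (\<forall>i<m. a \<le> s i \<and> s i \<le> t i \<and> t i \<le> b) \<and>
      (\<forall>i<m. \<forall>j<m. i \<noteq> j \<longrightarrow> t i \<le> s j \<or> t j \<le> s i) \<and> (\<Sum>i<m. t i - s i) < d \<longrightarrow>
      (\<Sum>i<m. norm (u (t i) - u (s i))) < \<epsilon>"
    using assms unfolding abs_cont_on_interval_def by blast
  then show thesis using that by blast
qed

lemma abs_cont_on_interval_imp_continuous_on:
  assumes "abs_cont_on_interval a b u"
  shows "continuous_on {a..b} u"
  unfolding continuous_on_iff
proof (intro ballI allI impI)
  fix x e :: real assume x: "x \<in> {a..b}" and e: "e > 0"
  obtain d where d: "d > 0" and small: "\<And>(m::nat) s t. \<forall>i<m. a \<le> s i \<and> s i \<le> t i \<and> t i \<le> b \<Longrightarrow>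
      \<forall>i<m. \<forall>j<m. i \<noteq> j \<longrightarrow> t i \<le> s j \<or> t j \<le> s i \<Longrightarrow> (\<Sum>i<m. t i - s i) < d \<Longrightarrow>
      (\<Sum>i<m. norm (u (t i) - u (s i))) < e"
    using abs_cont_on_intervalD[OF assms e] by blast
  show "\<exists>d>0. \<forall>y\<in>{a..b}. dist y x < d \<longrightarrow> dist (u y) (u x) < e"
  proof (intro exI conjI ballI impI)
    fix y assume y: "y \<in> {a..b}" and yx: "dist y x < d"
    have "(\<Sum>i<Suc 0. norm (u (max x y) - u (min x y))) < e"
      using small[of "Suc 0" "\<lambda>_. min x y" "\<lambda>_. max x y"] x y yx by (auto simp: dist_real_def)
    then show "dist (u y) (u x) < e"
      by (cases "x \<le> y") (auto simp: dist_norm norm_minus_commute max_def min_def)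
  qed (rule d)
qed

lemma abs_cont_on_interval_reflect_scale:
  assumes ac: "abs_cont_on_interval 0 T u" and T: "T > 0"
  shows "abs_cont_on_interval 0 1 (\<lambda>\<tau>. u (T * (1 - \<tau>)))"
  unfolding abs_cont_on_interval_def
proof (intro allI impI)
  fix \<epsilon> :: real assume \<epsilon>: "\<epsilon> > 0"
  obtain d where d: "d > 0" and small: "\<And>(m::nat) s t. \<forall>i<m. 0 \<le> s i \<and> s i \<le> t i \<and> t i \<le> T \<Longrightarrow>
      \<forall>i<m. \<forall>j<m. i \<noteq> j \<longrightarrow> t i \<le> s j \<or> t j \<le> s i \<Longrightarrow> (\<Sum>i<m. t i - s i) < d \<Longrightarrow>
      (\<Sum>i<m. norm (u (t i) - u (s i))) < \<epsilon>"
    using abs_cont_on_intervalD[OF ac \<epsilon>] by blast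
  show "\<exists>d>0. \<forall>(m::nat) s t. (\<forall>i<m. 0 \<le> s i \<and> s i \<le> t i \<and> t i \<le> 1) \<and>
      (\<forall>i<m. \<forall>j<m. i \<noteq> j \<longrightarrow> t i \<le> s j \<or> t j \<le> s i) \<and> (\<Sum>i<m. t i - s i) < d \<longrightarrow>
      (\<Sum>i<m. norm (u (T * (1 - t i)) - u (T * (1 - s i)))) < \<epsilon>"
  proof (intro exI conjI allI impI)
    show "d / T > 0" using d T by simp
    fix m :: nat and s t :: "nat \<Rightarrow> real"
    assume A: "(\<forall>i<m. 0 \<le> s i \<and> s i \<le> t i \<and> t i \<le> 1) \<and>
      (\<forall>i<m. \<forall>j<m. i \<noteq> j \<longrightarrow> t i \<le> s j \<or> t j \<le> s i) \<and> (\<Sum>i<m. t i - s i) < d / T"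
    have "(\<Sum>i<m. T * (1 - s i) - T * (1 - t i)) = T * (\<Sum>i<m. t i - s i)"
      by (simp add: sum_distrib_left algebra_simps)
    also have "\<dots> < d" using A T by (simp add: field_simps)
    finally have "(\<Sum>i<m. norm (u (T * (1 - s i)) - u (T * (1 - t i)))) < \<epsilon>"
      using A T by (intro small) (auto simp: mult_left_mono)
    then show "(\<Sum>i<m. norm (u (T * (1 - t i)) - u (T * (1 - s i)))) < \<epsilon>"
      by (simp add: norm_minus_commute)
  qed
qed

lemma abs_cont_on_interval_compose_lipschitz:
  fixes u :: "real \<Rightarrow> 'a::real_normed_vector" and \<phi> :: "'a \<Rightarrow> 'b::real_normed_vector"
  assumes ac: "abs_cont_on_interval a b u" and lip: "L-lipschitz_on S \<phi>" and S: "u ` {a..b} \<subseteq> S"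
  shows "abs_cont_on_interval a b (\<phi> \<circ> u)"
  unfolding abs_cont_on_interval_def
proof (intro allI impI)
  fix \<epsilon> :: real assume \<epsilon>: "\<epsilon> > 0"
  have L: "L \<ge> 0" using lip lipschitz_on_nonneg by blast
  then have "\<epsilon> / (L + 1) > 0" using \<epsilon> by simp
  then obtain d where d: "d > 0" and small: "\<And>(m::nat) s t. \<forall>i<m. a \<le> s i \<and> s i \<le> t i \<and> t i \<le> b \<Longrightarrow>
      \<forall>i<m. \<forall>j<m. i \<noteq> j \<longrightarrow> t i \<le> s j \<or> t j \<le> s i \<Longrightarrow> (\<Sum>i<m. t i - s i) < d \<Longrightarrow>
      (\<Sum>i<m. norm (u (t i) - u (s i))) < \<epsilon> / (L + 1)"
    using abs_cont_on_intervalD[OF ac] by blast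
  show "\<exists>d>0. \<forall>(m::nat) s t. (\<forall>i<m. a \<le> s i \<and> s i \<le> t i \<and> t i \<le> b) \<and>
      (\<forall>i<m. \<forall>j<m. i \<noteq> j \<longrightarrow> t i \<le> s j \<or> t j \<le> s i) \<and> (\<Sum>i<m. t i - s i) < d \<longrightarrow>
      (\<Sum>i<m. norm ((\<phi> \<circ> u) (t i) - (\<phi> \<circ> u) (s i))) < \<epsilon>"
  proof (intro exI conjI allI impI)
    fix m :: nat and s t :: "nat \<Rightarrow> real"
    assume A: "(\<forall>i<m. a \<le> s i \<and> s i \<le> t i \<and> t i \<le> b) \<and>
      (\<forall>i<m. \<forall>j<m. i \<noteq> j \<longrightarrow> t i \<le> s j \<or> t j \<le> s i) \<and> (\<Sum>i<m. t i - s i) < d"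
    have "(\<Sum>i<m. norm ((\<phi> \<circ> u) (t i) - (\<phi> \<circ> u) (s i))) \<le> (\<Sum>i<m. L * norm (u (t i) - u (s i)))"
    proof (rule sum_mono)
      fix i assume "i \<in> {..<m}"
      then have "t i \<in> {a..b}" "s i \<in> {a..b}" using A by auto
      then have "u (t i) \<in> S" "u (s i) \<in> S" using S by auto
      then show "norm ((\<phi> \<circ> u) (t i) - (\<phi> \<circ> u) (s i)) \<le> L * norm (u (t i) - u (s i))"
        using lipschitz_onD[OF lip] by (simp add: dist_norm)
    qed
    also have "\<dots> \<le> L * (\<epsilon> / (L + 1))"
      unfolding sum_distrib_left[symmetric] using small A L by (intro mult_left_mono) (auto intro: less_imp_le)
    also have "\<dots> < \<epsilon>" using \<epsilon> L by (simp add: field_simps)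
    finally show "(\<Sum>i<m. norm ((\<phi> \<circ> u) (t i) - (\<phi> \<circ> u) (s i))) < \<epsilon>" .
  qed (rule d)
qed

lemma abs_cont_on_interval_compose_locally_lipschitz:
  fixes u :: "real \<Rightarrow> 'a::real_normed_vector" and \<phi> :: "'a \<Rightarrow> 'b::real_normed_vector"
  assumes ac: "abs_cont_on_interval a b u" and lip: "\<And>R. \<exists>L. L-lipschitz_on (cball 0 R) \<phi>"
  shows "abs_cont_on_interval a b (\<phi> \<circ> u)"
proof -
  have "compact (u ` {a..b})"
    using abs_cont_on_interval_imp_continuous_on[OF ac] by (intro compact_continuous_image) auto
  then obtain R where "u ` {a..b} \<subseteq> ball 0 R"
    using compact_imp_bounded bounded_subset_ballD by blast
  then have "u ` {a..b} \<subseteq> cball 0 R" using ball_subset_cball by blast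
  moreover obtain L where "L-lipschitz_on (cball 0 R) \<phi>" using lip by blast
  ultimately show ?thesis by (intro abs_cont_on_interval_compose_lipschitz[OF ac])
qed

lemma interior_Icc_disjoint_imp_le:
  fixes c d c' d' :: real
  assumes "c < d" "c' < d'" "interior {c..d} \<inter> interior {c'..d'} = {}"
  shows "d \<le> c' \<or> d' \<le> c"
proof (rule ccontr)
  assume "\<not> ?thesis"
  then have "(max c c' + min d d') / 2 \<in> interior {c..d} \<inter> interior {c'..d'}"
    using assms by auto
  then show False using assms(3) by auto
qed

lemma division_of_real_enumerate:
  fixes \<D> :: "real set set"
  assumes \<D>: "\<D> division_of S" and S: "S \<subseteq> {a..b}"
  obtains m :: nat and s t where "\<forall>i<m. a \<le> s i \<and> s i \<le> t i \<and> t i \<le> b"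
    "\<forall>i<m. \<forall>j<m. i \<noteq> j \<longrightarrow> t i \<le> s j \<or> t j \<le> s i"
    "\<And>g :: real set \<Rightarrow> real. (\<And>c. g {c..c} = 0) \<Longrightarrow> (\<Sum>K\<in>\<D>. g K) = (\<Sum>i<m. g {s i..t i})"
proof -
  define \<D>' where "\<D>' = {K \<in> \<D>. measure lebesgue K \<noteq> 0}"
  have Icc: "\<exists>c d. K = {c..d} \<and> c \<le> d" if K: "K \<in> \<D>" for K
  proof -
    obtain c d where "K = cbox c d" using division_ofD(4)[OF \<D> K] by blast
    moreover have "K \<noteq> {}" using division_ofD(3)[OF \<D> K] .
    ultimately show ?thesis by auto
  qed
  obtain h where h: "bij_betw h {..<card \<D>'} \<D>'"
    using ex_bij_betw_nat_finite[of \<D>'] division_ofD(1)[OF \<D>] unfolding \<D>'_def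
    by (auto simp: atLeast0LessThan)
  define m s t where "m = card \<D>'" and "s i = Inf (h i)" and "t i = Sup (h i)" for i
  have hi: "h i \<in> \<D>" "measure lebesgue (h i) \<noteq> 0" if "i < m" for i
    using h that unfolding m_def \<D>'_def bij_betw_def by auto
  have st: "h i = {s i..t i} \<and> s i < t i \<and> a \<le> s i \<and> t i \<le> b" if i: "i < m" for i
  proof -
    obtain c d where "h i = {c..d}" "c \<le> d" using Icc[OF hi(1)[OF i]] by blast
    moreover have "h i \<subseteq> {a..b}" using division_ofD(2)[OF \<D> hi(1)[OF i]] S by blast
    ultimately show ?thesis using hi(2)[OF i] unfolding s_def t_def by auto
  qed
  show thesis
  proof
    show "\<forall>i<m. a \<le> s i \<and> s i \<le> t i \<and> t i \<le> b" using st by (simp add: less_imp_le)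
    show "\<forall>i<m. \<forall>j<m. i \<noteq> j \<longrightarrow> t i \<le> s j \<or> t j \<le> s i"
    proof (intro allI impI)
      fix i j assume ij: "i < m" "j < m" "i \<noteq> j"
      then have "h i \<noteq> h j" using h unfolding bij_betw_def inj_on_def m_def by auto
      then have "interior (h i) \<inter> interior (h j) = {}" using division_ofD(5)[OF \<D>] hi ij by blast
      moreover have "h i = {s i..t i}" "s i < t i" "h j = {s j..t j}" "s j < t j"
        using st[OF ij(1)] st[OF ij(2)] by auto
      ultimately show "t i \<le> s j \<or> t j \<le> s i" using interior_Icc_disjoint_imp_le by metis
    qed
    fix g :: "real set \<Rightarrow> real" assume g0: "\<And>c. g {c..c} = 0"
    have "(\<Sum>K\<in>\<D>. g K) = (\<Sum>K\<in>\<D>'. g K)"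
    proof (rule sum.mono_neutral_right)
      show "\<forall>K\<in>\<D> - \<D>'. g K = 0"
      proof
        fix K assume K: "K \<in> \<D> - \<D>'"
        then obtain c d where "K = {c..d}" "c \<le> d" using Icc by blast
        moreover have "measure lebesgue K = 0" using K unfolding \<D>'_def by blast
        ultimately show "g K = 0" using g0 by simp
      qed
    qed (use division_ofD(1)[OF \<D>] \<D>'_def in auto)
    also have "\<dots> = (\<Sum>i<m. g (h i))"
      using sum.reindex_bij_betw[OF h, of g] unfolding m_def by simp
    also have "\<dots> = (\<Sum>i<m. g {s i..t i})"
      using st by (intro sum.cong refl) simp
    finally show "(\<Sum>K\<in>\<D>. g K) = (\<Sum>i<m. g {s i..t i})" .
  qed
qed

lemma abs_cont_on_interval_division:
  fixes u :: "real \<Rightarrow> 'a::real_normed_vector"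
  assumes "abs_cont_on_interval a b u" "\<epsilon> > 0"
  obtains \<eta> where "\<eta> > 0" "\<And>\<D> S. \<D> division_of S \<Longrightarrow> S \<subseteq> {a..b} \<Longrightarrow> measure lebesgue S < \<eta> \<Longrightarrow>
      (\<Sum>K\<in>\<D>. norm (u (Sup K) - u (Inf K))) < \<epsilon>"
proof -
  obtain \<eta> where \<eta>: "\<eta> > 0" and small: "\<And>(m::nat) s t. \<forall>i<m. a \<le> s i \<and> s i \<le> t i \<and> t i \<le> b \<Longrightarrow>
      \<forall>i<m. \<forall>j<m. i \<noteq> j \<longrightarrow> t i \<le> s j \<or> t j \<le> s i \<Longrightarrow> (\<Sum>i<m. t i - s i) < \<eta> \<Longrightarrow>
      (\<Sum>i<m. norm (u (t i) - u (s i))) < \<epsilon>"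
    using abs_cont_on_intervalD[OF assms] by blast
  show thesis
  proof (rule that[OF \<eta>])
    fix \<D> S assume \<D>: "\<D> division_of S" and S: "S \<subseteq> {a..b}" and mS: "measure lebesgue S < \<eta>"
    obtain m :: nat and s t where st: "\<forall>i<m. a \<le> s i \<and> s i \<le> t i \<and> t i \<le> b"
      and ord: "\<forall>i<m. \<forall>j<m. i \<noteq> j \<longrightarrow> t i \<le> s j \<or> t j \<le> s i"
      and sums: "\<And>g :: real set \<Rightarrow> real. (\<And>c. g {c..c} = 0) \<Longrightarrow> (\<Sum>K\<in>\<D>. g K) = (\<Sum>i<m. g {s i..t i})"
      using division_of_real_enumerate[OF \<D> S] by blast
    have "(\<Sum>i<m. t i - s i) = (\<Sum>K\<in>\<D>. measure lebesgue K)"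
      using sums[of "measure lebesgue"] st by (simp add: content_division)
    also have "\<dots> = measure lebesgue S" by (rule content_division[OF \<D>])
    finally have "(\<Sum>i<m. t i - s i) < \<eta>" using mS by simp
    then have "(\<Sum>i<m. norm (u (t i) - u (s i))) < \<epsilon>" by (rule small[OF st ord])
    moreover have "(\<Sum>K\<in>\<D>. norm (u (Sup K) - u (Inf K))) = (\<Sum>i<m. norm (u (t i) - u (s i)))"
      using sums[of "\<lambda>K. norm (u (Sup K) - u (Inf K))"] st by simp
    ultimately show "(\<Sum>K\<in>\<D>. norm (u (Sup K) - u (Inf K))) < \<epsilon>" by simp
  qed
qed

lemma negligible_imp_open_superset:
  assumes N: "negligible N" and "\<eta> > 0"
  obtains T where "open T" "N \<subseteq> T" "T \<in> lmeasurable" "measure lebesgue T < \<eta>"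
proof -
  have N0: "N \<in> null_sets lebesgue" using N negligible_iff_null_sets by blast
  obtain T where T: "open T" "N \<subseteq> T" "T - N \<in> lmeasurable" "emeasure lebesgue (T - N) < ennreal \<eta>"
    using sets_lebesgue_outer_open[OF null_setsD2[OF N0] \<open>\<eta> > 0\<close>] by blast
  have TN: "T = (T - N) \<union> N" using T(2) by blast
  have "T \<in> lmeasurable"
    using fmeasurable.Un[OF T(3) negligible_imp_measurable[OF N]] TN by simp
  moreover have "measure lebesgue T = measure lebesgue (T - N)"
    using measure_Un_null_set[OF fmeasurableD[OF T(3)] N0] TN by simp
  moreover have "measure lebesgue (T - N) < \<eta>"
    using T(4) emeasure_eq_measure2[OF T(3)] \<open>\<eta> > 0\<close> by (simp add: ennreal_less_iff)
  ultimately show thesis using that T(1,2) by simp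
qed

lemma tagged_division_derivative_sum_le:
  fixes u u' :: "real \<Rightarrow> real"
  assumes p: "p tagged_division_of {a..b}" and fine: "(\<lambda>x. ball x (r x)) fine p" and e: "e \<ge> 0" and ab: "a \<le> b"
    and approx: "\<And>x y. x \<in> {a..b} - N \<Longrightarrow> y \<in> {a..b} \<Longrightarrow> \<bar>y - x\<bar> < r x \<Longrightarrow>
      \<bar>u y - u x - u' x * (y - x)\<bar> \<le> e * \<bar>y - x\<bar>"
  shows "\<bar>\<Sum>(x, K)\<in>{z \<in> p. fst z \<notin> N}. measure lborel K * u' x - (u (Sup K) - u (Inf K))\<bar>
    \<le> e * (b - a)"
proof -
  have each: "\<bar>measure lborel K * u' x - (u (Sup K) - u (Inf K))\<bar> \<le> e * measure lborel K"
    if xK: "(x, K) \<in> p" "x \<notin> N" for x K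
  proof -
    obtain c d where K: "K = cbox c d" using tagged_division_ofD(4)[OF p xK(1)] by blast
    have "x \<in> K" "K \<subseteq> {a..b}" using tagged_division_ofD(2,3)[OF p xK(1)] by auto
    then have cd: "K = {c..d}" "c \<le> x" "x \<le> d" "a \<le> c" "d \<le> b" using K by auto
    have "K \<subseteq> ball x (r x)" using fine xK(1) by (auto simp: fine_def)
    moreover have "c \<in> K" "d \<in> K" using cd by auto
    ultimately have "c \<in> ball x (r x)" "d \<in> ball x (r x)" by blast+
    then have "\<bar>c - x\<bar> < r x" "\<bar>d - x\<bar> < r x" by (auto simp: dist_real_def abs_minus_commute)
    then have "\<bar>u c - u x - u' x * (c - x)\<bar> \<le> e * (x - c)" "\<bar>u d - u x - u' x * (d - x)\<bar> \<le> e * (d - x)"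
      using approx[of x c] approx[of x d] cd xK(2) by auto
    moreover have "measure lborel K * u' x - (u (Sup K) - u (Inf K))
        = (u c - u x - u' x * (c - x)) - (u d - u x - u' x * (d - x))"
      using cd by (simp add: algebra_simps)
    ultimately show ?thesis using cd by (simp add: algebra_simps)
  qed
  have "\<bar>\<Sum>(x, K)\<in>{z \<in> p. fst z \<notin> N}. measure lborel K * u' x - (u (Sup K) - u (Inf K))\<bar>
      \<le> (\<Sum>(x, K)\<in>{z \<in> p. fst z \<notin> N}. e * measure lborel K)"
    by (rule order_trans[OF sum_abs sum_mono]) (auto intro: each)
  also have "\<dots> \<le> (\<Sum>(x, K)\<in>p. e * measure lborel K)"
    using tagged_division_ofD(1)[OF p] e by (intro sum_mono2) auto
  also have "\<dots> \<le> e * (b - a)"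
    using additive_content_tagged_division[of p a b] p e ab
    by (simp add: sum_distrib_left[symmetric] case_prod_unfold)
  finally show ?thesis .
qed

lemma tagged_division_null_tags_sum_less:
  fixes u :: "real \<Rightarrow> real"
  assumes p: "p tagged_division_of {a..b}" and fine: "(\<lambda>x. ball x (r x)) fine p"
    and cover: "\<And>x. x \<in> N \<Longrightarrow> ball x (r x) \<subseteq> T" and T: "T \<in> lmeasurable" "measure lebesgue T < \<eta>"
    and small: "\<And>\<D> S. \<D> division_of S \<Longrightarrow> S \<subseteq> {a..b} \<Longrightarrow> measure lebesgue S < \<eta> \<Longrightarrow>
      (\<Sum>K\<in>\<D>. norm (u (Sup K) - u (Inf K))) < \<epsilon>"
  shows "\<bar>\<Sum>(x, K)\<in>{z \<in> p. fst z \<in> N}. u (Sup K) - u (Inf K)\<bar> < \<epsilon>"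
proof -
  define P where "P = {z \<in> p. fst z \<in> N}"
  have "P tagged_partial_division_of {a..b}"
    using tagged_partial_division_subset[of p "{a..b}" P] p unfolding P_def tagged_division_of_def by auto
  then have P: "P tagged_division_of \<Union>(snd ` P)" and \<D>: "snd ` P division_of \<Union>(snd ` P)"
    by (auto intro: tagged_partial_division_of_Union_self partial_division_of_tagged_division)
  have sub: "\<Union>(snd ` P) \<subseteq> {a..b} \<inter> T"
  proof
    fix y assume "y \<in> \<Union>(snd ` P)"
    then obtain x K where "(x, K) \<in> p" "x \<in> N" "y \<in> K" unfolding P_def by force
    then show "y \<in> {a..b} \<inter> T"
      using tagged_division_ofD(3)[OF p] fine cover by (force simp: fine_def)
  qed
  have "measure lebesgue (\<Union>(snd ` P)) \<le> measure lebesgue T"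
    using sub lmeasurable_division[OF \<D>] T(1) by (intro measure_mono_fmeasurable) auto
  then have less: "(\<Sum>K\<in>snd ` P. norm (u (Sup K) - u (Inf K))) < \<epsilon>"
    using small[OF \<D>] sub T(2) by auto
  have "(\<Sum>K\<in>snd ` P. norm (u (Sup K) - u (Inf K))) = (\<Sum>(x, K)\<in>P. norm (u (Sup K) - u (Inf K)))"
  proof (subst sum.reindex_nontrivial)
    fix z z' assume zz: "z \<in> P" "z' \<in> P" "z \<noteq> z'" "snd z = snd z'"
    obtain x K x' where z: "z = (x, K)" "z' = (x', K)" using zz(4) by (metis prod.collapse)
    have "interior K \<inter> interior K = {}" using tagged_division_ofD(5)[OF P, of x K x' K] zz z by auto
    then have "interior K = {}" by simp
    moreover obtain c d where cd: "K = cbox c d" "x \<in> K" using tagged_division_ofD(2,4)[OF P] zz(1) z by blast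
    ultimately have "K = {c..c}" by auto
    then show "norm (u (Sup (snd z)) - u (Inf (snd z))) = 0" using z by simp
  qed (use tagged_division_ofD(1)[OF P] in \<open>auto simp: case_prod_unfold\<close>)
  then show ?thesis
    using less order_le_less_trans[OF sum_abs] unfolding P_def[symmetric] by (simp add: case_prod_unfold)
qed

lemma derivative_gauge_avoiding:
  fixes u u' :: "real \<Rightarrow> real"
  assumes T: "open T" "N \<subseteq> T" and e: "e > 0"
    and der: "\<And>x. x \<in> {a..b} - N \<Longrightarrow> (u has_real_derivative u' x) (at x within {a..b})"
  obtains r where "\<And>x. r x > 0" "\<And>x. x \<in> N \<Longrightarrow> ball x (r x) \<subseteq> T"
    "\<And>x y. x \<in> {a..b} - N \<Longrightarrow> y \<in> {a..b} \<Longrightarrow> \<bar>y - x\<bar> < r x \<Longrightarrow>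
      \<bar>u y - u x - u' x * (y - x)\<bar> \<le> e * \<bar>y - x\<bar>"
proof -
  have "\<exists>\<rho>>0. (x \<in> N \<longrightarrow> ball x \<rho> \<subseteq> T) \<and> (x \<in> {a..b} - N \<longrightarrow>
      (\<forall>y\<in>{a..b}. \<bar>y - x\<bar> < \<rho> \<longrightarrow> \<bar>u y - u x - u' x * (y - x)\<bar> \<le> e * \<bar>y - x\<bar>))" for x
  proof (cases "x \<in> {a..b} - N")
    case True
    then have "(u has_derivative (\<lambda>h. u' x * h)) (at x within {a..b})"
      using der by (simp add: has_field_derivative_def)
    then obtain \<rho> where "\<rho> > 0" "\<forall>y\<in>{a..b}. norm (y - x) < \<rho> \<longrightarrow>
        norm (u y - u x - u' x * (y - x)) \<le> e * norm (y - x)"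
      using e unfolding has_derivative_within_alt by blast
    then show ?thesis using True by auto
  next
    case False
    show ?thesis
    proof (cases "x \<in> N")
      case True
      then show ?thesis using T open_contains_ball False by blast
    qed (use False in \<open>auto intro: exI[of _ 1]\<close>)
  qed
  then show thesis using that by metis
qed

theorem fundamental_theorem_of_calculus_abs_cont:
  fixes u u' :: "real \<Rightarrow> real"
  assumes ab: "a < b" and ac: "abs_cont_on_interval a b u" and N: "negligible N"
    and der: "\<And>x. x \<in> {a..b} - N \<Longrightarrow> (u has_real_derivative u' x) (at x within {a..b})"
  shows "((\<lambda>x. if x \<in> N then 0 else u' x) has_integral (u b - u a)) {a..b}"
  unfolding has_integral_factor_content_real
proof (intro allI impI)
  fix e :: real assume e: "e > 0"
  then obtain \<eta> where \<eta>: "\<eta> > 0" and small: "\<And>\<D> S. \<D> division_of S \<Longrightarrow> S \<subseteq> {a..b} \<Longrightarrow>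
      measure lebesgue S < \<eta> \<Longrightarrow> (\<Sum>K\<in>\<D>. norm (u (Sup K) - u (Inf K))) < e / 2 * (b - a)"
    using abs_cont_on_interval_division[OF ac, of "e / 2 * (b - a)"] ab by auto
  obtain T where T: "open T" "N \<subseteq> T" "T \<in> lmeasurable" "measure lebesgue T < \<eta>"
    using negligible_imp_open_superset[OF N \<eta>] by blast
  obtain r where r: "\<And>x. r x > 0" "\<And>x. x \<in> N \<Longrightarrow> ball x (r x) \<subseteq> T"
    "\<And>x y. x \<in> {a..b} - N \<Longrightarrow> y \<in> {a..b} \<Longrightarrow> \<bar>y - x\<bar> < r x \<Longrightarrow>
      \<bar>u y - u x - u' x * (y - x)\<bar> \<le> e / 2 * \<bar>y - x\<bar>"
    using derivative_gauge_avoiding[OF T(1,2) _ der] e by (metis half_gt_zero)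
  show "\<exists>d. gauge d \<and> (\<forall>p. p tagged_division_of {a..b} \<and> d fine p \<longrightarrow>
      norm ((\<Sum>(x, K)\<in>p. measure lborel K *\<^sub>R (if x \<in> N then 0 else u' x)) - (u b - u a)) \<le> e * measure lborel {a..b})"
  proof (intro exI conjI allI impI)
    show "gauge (\<lambda>x. ball x (r x))" using r(1) by (intro gauge_ball_dependent) auto
    fix p assume "p tagged_division_of {a..b} \<and> (\<lambda>x. ball x (r x)) fine p"
    then have p: "p tagged_division_of {a..b}" and fine: "(\<lambda>x. ball x (r x)) fine p" by auto
    define F where "F x K = measure lborel K * (if x \<in> N then 0 else u' x) - (u (Sup K) - u (Inf K))" for x K
    define A where "A = (\<Sum>(x, K)\<in>{z \<in> p. fst z \<notin> N}. measure lborel K * u' x - (u (Sup K) - u (Inf K)))"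
    define C where "C = (\<Sum>(x, K)\<in>{z \<in> p. fst z \<in> N}. u (Sup K) - u (Inf K))"
    have "(\<Sum>(x, K)\<in>p. measure lborel K *\<^sub>R (if x \<in> N then 0 else u' x)) - (u b - u a) = (\<Sum>(x, K)\<in>p. F x K)"
      using additive_tagged_division_1[OF less_imp_le[OF ab] p, of u]
      by (simp add: F_def sum_subtractf case_prod_unfold)
    also have "\<dots> = (\<Sum>(x, K)\<in>{z \<in> p. fst z \<notin> N}. F x K) + (\<Sum>(x, K)\<in>{z \<in> p. fst z \<in> N}. F x K)"
      using tagged_division_ofD(1)[OF p] by (subst sum.union_disjoint[symmetric]) (auto intro: sum.cong)
    also have "\<dots> = A - C"
      unfolding A_def C_def F_def by (simp add: case_prod_unfold sum_subtractf)
    finally have "norm ((\<Sum>(x, K)\<in>p. measure lborel K *\<^sub>R (if x \<in> N then 0 else u' x)) - (u b - u a))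
        \<le> \<bar>A\<bar> + \<bar>C\<bar>" using abs_triangle_ineq4[of A C] by simp
    moreover have "\<bar>A\<bar> \<le> e / 2 * (b - a)"
      unfolding A_def using e ab by (intro tagged_division_derivative_sum_le[OF p fine _ _ r(3)]) auto
    moreover have "\<bar>C\<bar> < e / 2 * (b - a)"
      unfolding C_def by (rule tagged_division_null_tags_sum_less[OF p fine r(2) T(3,4) small])
    ultimately show "norm ((\<Sum>(x, K)\<in>p. measure lborel K *\<^sub>R (if x \<in> N then 0 else u' x)) - (u b - u a))
        \<le> e * measure lborel {a..b}" using ab by simp
  qed
qed

section \<open>Mixed partial derivatives\<close>

lemma has_derivative_difference_quotient:
  fixes f :: "'a::real_normed_vector \<Rightarrow> 'b::real_normed_vector"
  assumes "(f has_derivative f') (at x)"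
  shows "((\<lambda>s::real. (1 / s) *\<^sub>R (f (x + s *\<^sub>R a) - f x)) \<longlongrightarrow> f' a) (at 0)"
proof -
  have lin: "linear f'" using assms has_derivative_linear by blast
  have "((\<lambda>s::real. x + s *\<^sub>R a) has_derivative (\<lambda>h. h *\<^sub>R a)) (at 0)"
    by (auto intro!: derivative_eq_intros)
  from has_derivative_compose[OF this, of f f'] assms
  have "((\<lambda>s. f (x + s *\<^sub>R a)) has_derivative (\<lambda>h. h *\<^sub>R f' a)) (at 0)"
    using linear_scale[OF lin] by (simp add: o_def)
  then have "((\<lambda>s. norm (f (x + s *\<^sub>R a) - f (x + 0 *\<^sub>R a) - (s - 0) *\<^sub>R f' a) / norm (s - 0)) \<longlongrightarrow> 0)
      (at (0::real))"
    unfolding has_derivative_iff_norm by blast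
  then have L: "((\<lambda>s. norm (f (x + s *\<^sub>R a) - f x - s *\<^sub>R f' a) / \<bar>s\<bar>) \<longlongrightarrow> 0) (at (0::real))"
    by simp
  have "((\<lambda>s::real. (1 / s) *\<^sub>R (f (x + s *\<^sub>R a) - f x) - f' a) \<longlongrightarrow> 0) (at 0)"
  proof (rule Lim_null_comparison[OF _ L])
    show "\<forall>\<^sub>F s in at 0. norm ((1 / s) *\<^sub>R (f (x + s *\<^sub>R a) - f x) - f' a)
        \<le> norm (f (x + s *\<^sub>R a) - f x - s *\<^sub>R f' a) / \<bar>s\<bar>"
    proof (rule eventually_mono[OF eventually_neq_at_within[of 0]])
      fix s :: real assume "s \<noteq> 0"
      then have "(1 / s) *\<^sub>R (f (x + s *\<^sub>R a) - f x) - f' a = (1 / s) *\<^sub>R (f (x + s *\<^sub>R a) - f x - s *\<^sub>R f' a)"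
        by (simp add: scaleR_diff_right)
      then show "norm ((1 / s) *\<^sub>R (f (x + s *\<^sub>R a) - f x) - f' a)
          \<le> norm (f (x + s *\<^sub>R a) - f x - s *\<^sub>R f' a) / \<bar>s\<bar>" by simp
    qed
  qed
  then show ?thesis by (simp add: LIM_zero_iff)
qed

lemma differentiable_bound_real_segment:
  fixes \<phi> :: "real \<Rightarrow> 'b::real_normed_vector"
  assumes "\<And>s. s \<in> closed_segment 0 r \<Longrightarrow> (\<phi> has_derivative (\<lambda>h. h *\<^sub>R \<phi>' s)) (at s)"
    and "\<And>s. s \<in> closed_segment 0 r \<Longrightarrow> norm (\<phi>' s) \<le> B"
  shows "norm (\<phi> r - \<phi> 0) \<le> B * \<bar>r\<bar>"
proof -
  have "norm (\<phi> r - \<phi> 0) \<le> B * norm (r - 0)"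
  proof (rule differentiable_bound[of "closed_segment 0 r" \<phi> "\<lambda>s h. h *\<^sub>R \<phi>' s"])
    show "(\<phi> has_derivative (\<lambda>h. h *\<^sub>R \<phi>' s)) (at s within closed_segment 0 r)"
      if "s \<in> closed_segment 0 r" for s
      using assms(1)[OF that] has_derivative_at_withinI by blast
    show "onorm (\<lambda>h. h *\<^sub>R \<phi>' s) \<le> B" if "s \<in> closed_segment 0 r" for s
    proof -
      have "onorm (\<lambda>h::real. h) = 1" by (rule onorm_id)
      then show ?thesis using assms(2)[OF that] onorm_scaleR_left[of "\<lambda>x. x" "\<phi>' s"] by simp
    qed
  qed auto
  then show ?thesis by simp
qed

lemma first_difference_bound:
  fixes DF DB :: "'a::real_normed_vector \<Rightarrow> 'a \<Rightarrow> 'b::real_normed_vector"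
  assumes dB: "\<And>w. ((\<lambda>w. DF w b) has_derivative DB w) (at w)"
    and near: "\<And>w. dist w z < \<rho> \<Longrightarrow> norm (DB w a - C) \<le> e"
    and s: "\<bar>s\<bar> * norm a < \<rho> / 2" and \<tau>: "\<bar>\<tau>\<bar> * norm b < \<rho> / 2"
  shows "norm (DF (z + s *\<^sub>R a + \<tau> *\<^sub>R b) b - DF (z + \<tau> *\<^sub>R b) b - s *\<^sub>R C) \<le> e * \<bar>s\<bar>"
proof -
  have linB: "linear (DB w)" for w using dB has_derivative_linear by blast
  have "norm ((\<lambda>\<sigma>. DF (z + \<sigma> *\<^sub>R a + \<tau> *\<^sub>R b) b - \<sigma> *\<^sub>R C) s - (\<lambda>\<sigma>. DF (z + \<sigma> *\<^sub>R a + \<tau> *\<^sub>R b) b - \<sigma> *\<^sub>R C) 0)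
      \<le> e * \<bar>s\<bar>"
  proof (rule differentiable_bound_real_segment[where \<phi>' = "\<lambda>\<sigma>. DB (z + \<sigma> *\<^sub>R a + \<tau> *\<^sub>R b) a - C"])
    fix \<sigma> assume \<sigma>: "\<sigma> \<in> closed_segment 0 s"
    have "((\<lambda>\<sigma>::real. z + \<sigma> *\<^sub>R a + \<tau> *\<^sub>R b) has_derivative (\<lambda>h. h *\<^sub>R a)) (at \<sigma>)"
      by (auto intro!: derivative_eq_intros)
    from has_derivative_compose[OF this dB]
    have "((\<lambda>\<sigma>. DF (z + \<sigma> *\<^sub>R a + \<tau> *\<^sub>R b) b) has_derivative (\<lambda>h. h *\<^sub>R DB (z + \<sigma> *\<^sub>R a + \<tau> *\<^sub>R b) a)) (at \<sigma>)"
      using linear_scale[OF linB] by (simp add: o_def)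
    then show "((\<lambda>\<sigma>. DF (z + \<sigma> *\<^sub>R a + \<tau> *\<^sub>R b) b - \<sigma> *\<^sub>R C) has_derivative
        (\<lambda>h. h *\<^sub>R (DB (z + \<sigma> *\<^sub>R a + \<tau> *\<^sub>R b) a - C))) (at \<sigma>)"
      by (auto intro!: derivative_eq_intros simp: scaleR_diff_right)
    have "\<bar>\<sigma>\<bar> \<le> \<bar>s\<bar>" using \<sigma> by (auto simp: closed_segment_eq_real_ivl split: if_splits)
    then have "\<bar>\<sigma>\<bar> * norm a < \<rho> / 2" using s by (meson le_less_trans mult_right_mono norm_ge_zero)
    then have "norm (\<sigma> *\<^sub>R a + \<tau> *\<^sub>R b) < \<rho>"
      using \<tau> norm_triangle_ineq[of "\<sigma> *\<^sub>R a" "\<tau> *\<^sub>R b"] by simp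
    then show "norm (DB (z + \<sigma> *\<^sub>R a + \<tau> *\<^sub>R b) a - C) \<le> e"
      by (intro near) (simp add: dist_norm add.assoc)
  qed
  then show ?thesis by (simp add: algebra_simps)
qed

lemma second_difference_bound:
  fixes F :: "'a::real_normed_vector \<Rightarrow> 'b::real_normed_vector" and DF DB :: "'a \<Rightarrow> 'a \<Rightarrow> 'b"
  assumes dF: "\<And>w. (F has_derivative DF w) (at w)"
    and dB: "\<And>w. ((\<lambda>w. DF w b) has_derivative DB w) (at w)"
    and near: "\<And>w. dist w z < \<rho> \<Longrightarrow> norm (DB w a - C) \<le> e"
    and s: "\<bar>s\<bar> * norm a < \<rho> / 2" and r: "\<bar>r\<bar> * norm b < \<rho> / 2"
  shows "norm (F (z + s *\<^sub>R a + r *\<^sub>R b) - F (z + s *\<^sub>R a) - F (z + r *\<^sub>R b) + F z - (s * r) *\<^sub>R C)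
    \<le> e * \<bar>s\<bar> * \<bar>r\<bar>"
proof -
  have linF: "linear (DF w)" for w using dF has_derivative_linear by blast
  have inner: "norm (DF (z + s *\<^sub>R a + \<tau> *\<^sub>R b) b - DF (z + \<tau> *\<^sub>R b) b - s *\<^sub>R C) \<le> e * \<bar>s\<bar>"
    if \<tau>: "\<tau> \<in> closed_segment 0 r" for \<tau>
  proof (rule first_difference_bound[where DF = DF and b = b, OF dB near s])
    have "\<bar>\<tau>\<bar> \<le> \<bar>r\<bar>" using \<tau> by (auto simp: closed_segment_eq_real_ivl split: if_splits)
    then show "\<bar>\<tau>\<bar> * norm b < \<rho> / 2" using r by (meson le_less_trans mult_right_mono norm_ge_zero)
  qed
  have "norm ((\<lambda>\<tau>. F (z + s *\<^sub>R a + \<tau> *\<^sub>R b) - F (z + \<tau> *\<^sub>R b) - \<tau> *\<^sub>R (s *\<^sub>R C)) r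
      - (\<lambda>\<tau>. F (z + s *\<^sub>R a + \<tau> *\<^sub>R b) - F (z + \<tau> *\<^sub>R b) - \<tau> *\<^sub>R (s *\<^sub>R C)) 0) \<le> e * \<bar>s\<bar> * \<bar>r\<bar>"
  proof (rule differentiable_bound_real_segment[where \<phi>' = "\<lambda>\<tau>. DF (z + s *\<^sub>R a + \<tau> *\<^sub>R b) b - DF (z + \<tau> *\<^sub>R b) b - s *\<^sub>R C"])
    fix \<tau> assume \<tau>: "\<tau> \<in> closed_segment 0 r"
    have l1: "((\<lambda>\<tau>::real. z + s *\<^sub>R a + \<tau> *\<^sub>R b) has_derivative (\<lambda>h. h *\<^sub>R b)) (at \<tau>)"
      and l2: "((\<lambda>\<tau>::real. z + \<tau> *\<^sub>R b) has_derivative (\<lambda>h. h *\<^sub>R b)) (at \<tau>)"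
      by (auto intro!: derivative_eq_intros)
    have "((\<lambda>\<tau>. F (z + s *\<^sub>R a + \<tau> *\<^sub>R b)) has_derivative (\<lambda>h. h *\<^sub>R DF (z + s *\<^sub>R a + \<tau> *\<^sub>R b) b)) (at \<tau>)"
      "((\<lambda>\<tau>. F (z + \<tau> *\<^sub>R b)) has_derivative (\<lambda>h. h *\<^sub>R DF (z + \<tau> *\<^sub>R b) b)) (at \<tau>)"
      using has_derivative_compose[OF l1 dF] has_derivative_compose[OF l2 dF] linear_scale[OF linF]
      by (simp_all add: o_def)
    then show "((\<lambda>\<tau>. F (z + s *\<^sub>R a + \<tau> *\<^sub>R b) - F (z + \<tau> *\<^sub>R b) - \<tau> *\<^sub>R (s *\<^sub>R C)) has_derivative
        (\<lambda>h. h *\<^sub>R (DF (z + s *\<^sub>R a + \<tau> *\<^sub>R b) b - DF (z + \<tau> *\<^sub>R b) b - s *\<^sub>R C))) (at \<tau>)"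
      by (auto intro!: derivative_eq_intros simp: scaleR_diff_right)
  qed (rule inner)
  then show ?thesis by (simp add: algebra_simps)
qed

text \<open>Peano's theorem on mixed partials: only the derivative of \<open>DF \<cdot> b\<close> is assumed to exist,
  and the derivative of \<open>DF \<cdot> a\<close> in direction \<open>b\<close> comes out of it.\<close>
lemma mixed_partial_tendsto:
  fixes F :: "'a::real_normed_vector \<Rightarrow> 'b::real_normed_vector" and DF DB :: "'a \<Rightarrow> 'a \<Rightarrow> 'b"
  assumes dF: "\<And>w. (F has_derivative DF w) (at w)"
    and dB: "\<And>w. ((\<lambda>w. DF w b) has_derivative DB w) (at w)"
    and cont: "continuous (at z) (\<lambda>w. DB w a)"
  shows "((\<lambda>r::real. (1 / r) *\<^sub>R (DF (z + r *\<^sub>R b) a - DF z a)) \<longlongrightarrow> DB z a) (at 0)"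
  unfolding LIM_eq
proof (intro allI impI)
  fix \<epsilon> :: real assume \<epsilon>: "\<epsilon> > 0"
  define C where "C = DB z a"
  obtain \<rho> where \<rho>: "\<rho> > 0" "\<And>w. dist w z < \<rho> \<Longrightarrow> dist (DB w a) C < \<epsilon> / 2"
    using cont \<epsilon> unfolding continuous_at_eps_delta C_def by (meson half_gt_zero)
  have near: "\<And>w. dist w z < \<rho> \<Longrightarrow> norm (DB w a - C) \<le> \<epsilon> / 2"
    using \<rho>(2) by (simp add: dist_norm less_imp_le)
  have scale: "\<bar>s\<bar> * norm v < \<rho> / 2" if "\<bar>s\<bar> < \<rho> / (2 * (norm v + 1))" for s and v :: 'a
  proof -
    have "2 * (norm v + 1) > 0" by (smt (verit) norm_ge_zero)
    then have "\<bar>s\<bar> * (2 * (norm v + 1)) < \<rho>" using that by (simp only: pos_less_divide_eq)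
    moreover have "\<bar>s\<bar> * (2 * (norm v + 1)) = 2 * (\<bar>s\<bar> * norm v) + 2 * \<bar>s\<bar>"
      by (simp add: algebra_simps)
    ultimately show ?thesis by linarith
  qed
  show "\<exists>d>0. \<forall>r. r \<noteq> 0 \<and> norm (r - 0) < d \<longrightarrow> norm ((1 / r) *\<^sub>R (DF (z + r *\<^sub>R b) a - DF z a) - DB z a) < \<epsilon>"
  proof (intro exI conjI allI impI)
    show "\<rho> / (2 * (norm b + 1)) > 0" using \<rho>(1) by (smt (verit) norm_ge_zero divide_pos_pos)
    fix r :: real assume "r \<noteq> 0 \<and> norm (r - 0) < \<rho> / (2 * (norm b + 1))"
    then have r: "r \<noteq> 0" "\<bar>r\<bar> * norm b < \<rho> / 2" using scale by auto
    define Q where "Q s = (1 / s) *\<^sub>R (F (z + r *\<^sub>R b + s *\<^sub>R a) - F (z + r *\<^sub>R b))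
      - (1 / s) *\<^sub>R (F (z + s *\<^sub>R a) - F z) - r *\<^sub>R C" for s :: real
    have "(Q \<longlongrightarrow> DF (z + r *\<^sub>R b) a - DF z a - r *\<^sub>R C) (at 0)"
      unfolding Q_def by (intro tendsto_intros has_derivative_difference_quotient dF)
    moreover have "\<forall>\<^sub>F s in at 0. norm (Q s) \<le> \<epsilon> / 2 * \<bar>r\<bar>"
    proof (rule eventually_mono[OF eventually_at_ball'[of "\<rho> / (2 * (norm a + 1))" 0 UNIV]])
      show "\<rho> / (2 * (norm a + 1)) > 0" using \<rho>(1) by (smt (verit) norm_ge_zero divide_pos_pos)
      fix s :: real assume "s \<in> ball 0 (\<rho> / (2 * (norm a + 1))) \<and> s \<noteq> 0 \<and> s \<in> UNIV"
      then have s: "s \<noteq> 0" "\<bar>s\<bar> * norm a < \<rho> / 2" using scale by auto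
      have "Q s = (1 / s) *\<^sub>R (F (z + s *\<^sub>R a + r *\<^sub>R b) - F (z + s *\<^sub>R a) - F (z + r *\<^sub>R b) + F z - (s * r) *\<^sub>R C)"
        using s(1) unfolding Q_def by (simp add: algebra_simps scaleR_diff_right)
      then have "norm (Q s) = norm (F (z + s *\<^sub>R a + r *\<^sub>R b) - F (z + s *\<^sub>R a) - F (z + r *\<^sub>R b) + F z - (s * r) *\<^sub>R C) / \<bar>s\<bar>"
        by simp
      also have "\<dots> \<le> \<epsilon> / 2 * \<bar>s\<bar> * \<bar>r\<bar> / \<bar>s\<bar>"
        using second_difference_bound[OF dF dB near s(2) r(2)] by (intro divide_right_mono) auto
      finally show "norm (Q s) \<le> \<epsilon> / 2 * \<bar>r\<bar>" using s(1) by simp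
    qed
    ultimately have "norm (DF (z + r *\<^sub>R b) a - DF z a - r *\<^sub>R C) \<le> \<epsilon> / 2 * \<bar>r\<bar>"
      by (intro Lim_norm_ubound) auto
    moreover have "(1 / r) *\<^sub>R (DF (z + r *\<^sub>R b) a - DF z a) - C = (1 / r) *\<^sub>R (DF (z + r *\<^sub>R b) a - DF z a - r *\<^sub>R C)"
      using r(1) by (simp add: scaleR_diff_right)
    ultimately have "norm ((1 / r) *\<^sub>R (DF (z + r *\<^sub>R b) a - DF z a) - C) \<le> \<epsilon> / 2"
      using r(1) by (simp add: divide_le_eq mult.commute)
    then show "norm ((1 / r) *\<^sub>R (DF (z + r *\<^sub>R b) a - DF z a) - DB z a) < \<epsilon>"
      using \<epsilon> unfolding C_def by linarith
  qed
qed

section \<open>Matrices\<close>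

lemma norm_matrix_vector_mult_le: "norm ((A :: real^'m^'n) *v x) \<le> norm A * norm x"
proof -
  have "(norm (A *v x))\<^sup>2 = (A *v x) \<bullet> (A *v x)" by (simp add: dot_square_norm)
  also have "\<dots> = (\<Sum>i\<in>UNIV. (A *v x) $ i * (A *v x) $ i)" unfolding inner_vec_def by simp
  also have "\<dots> = (\<Sum>i\<in>UNIV. (A $ i \<bullet> x)\<^sup>2)" unfolding matrix_vector_mul_component by (simp add: power2_eq_square)
  also have "\<dots> \<le> (\<Sum>i\<in>UNIV. (norm (A $ i))\<^sup>2 * (norm x)\<^sup>2)"
  proof (rule sum_mono)
    fix i
    have "(A $ i \<bullet> x)\<^sup>2 \<le> (A $ i \<bullet> A $ i) * (x \<bullet> x)" by (rule Cauchy_Schwarz_ineq)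
    then show "(A $ i \<bullet> x)\<^sup>2 \<le> (norm (A $ i))\<^sup>2 * (norm x)\<^sup>2" by (simp add: dot_square_norm)
  qed
  also have "\<dots> = (norm A)\<^sup>2 * (norm x)\<^sup>2"
    by (simp add: sum_distrib_right[symmetric] dot_square_norm[symmetric] inner_vec_def)
  also have "\<dots> = (norm A * norm x)\<^sup>2" by (simp add: power_mult_distrib)
  finally show ?thesis by (rule power2_le_imp_le) simp
qed

lemma bounded_linear_matrix_vector_mult_left: "bounded_linear (\<lambda>A :: real^'m^'n. A *v x)"
proof (rule bounded_linear_intro[where K = "norm x"])
  show "(A + B) *v x = A *v x + B *v x" for A B :: "real^'m^'n" by (simp add: algebra_simps)
  show "(r *\<^sub>R A) *v x = r *\<^sub>R (A *v x)" for r and A :: "real^'m^'n"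
    by (simp add: matrix_vector_mult_def vec_eq_iff sum_distrib_left mult.assoc)
  show "norm (A *v x) \<le> norm A * norm x" for A :: "real^'m^'n" by (rule norm_matrix_vector_mult_le)
qed

lemma norm_transpose: "norm (transpose (A :: real^'m^'n)) = norm A"
proof -
  have "transpose A \<bullet> transpose A = A \<bullet> A"
    by (simp add: inner_vec_def transpose_def) (rule sum.swap)
  then show ?thesis by (simp add: norm_eq_sqrt_inner)
qed

lemma bounded_linear_transpose: "bounded_linear (transpose :: real^'m^'n \<Rightarrow> real^'n^'m)"
proof (rule bounded_linear_intro[where K = 1])
  show "transpose (A + B) = transpose A + transpose B" for A B :: "real^'m^'n"
    by (simp add: transpose_def vec_eq_iff)
  show "transpose (r *\<^sub>R A) = r *\<^sub>R transpose A" for r and A :: "real^'m^'n"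
    by (simp add: transpose_def vec_eq_iff)
  show "norm (transpose A) \<le> norm A * 1" for A :: "real^'m^'n" by (simp add: norm_transpose)
qed

lemma inner_matrix_vector_mult_transpose: "((A :: real^'m^'n) *v x) \<bullet> y = x \<bullet> (transpose A *v y)"
  by (metis dot_lmul_matrix transpose_matrix_vector transpose_transpose)

lemma symmetric_matrix_if_inner_commute:
  fixes A :: "real^'m^'m"
  assumes "\<And>a b. (A *v a) \<bullet> b = (A *v b) \<bullet> a"
  shows "transpose A = A"
proof -
  have "A $ i $ j = A $ j $ i" for i j
  proof -
    have "(A *v axis j 1) \<bullet> axis i 1 = (A *v axis i 1) \<bullet> axis j 1" by (rule assms)
    then show ?thesis by (simp add: inner_axis matrix_vector_mul_component)
  qed
  then show ?thesis by (simp add: transpose_def vec_eq_iff)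
qed

lemma scaleR_diff_matrix_vector_mult: "(c *\<^sub>R (A - B)) *v x = c *\<^sub>R (A *v x - (B :: real^'m^'k) *v x)"
proof -
  have l: "linear (\<lambda>A :: real^'m^'k. A *v x)" by (rule bounded_linear.linear[OF bounded_linear_matrix_vector_mult_left])
  show ?thesis using linear_scale[OF l, of c "A - B"] linear_diff[OF l, of A B] by simp
qed

lemma transpose_axis: "transpose (A :: real^'m^'k) *v axis i 1 = A $ i"
  by (simp add: vec_eq_iff matrix_vector_mult_def transpose_def axis_def if_distrib cong: if_cong)

lemma isCont_matrix_vector_mult_left: "isCont Hm z \<Longrightarrow> isCont (\<lambda>w. (Hm w :: real^'m^'n) *v x) z"
  using bounded_linear.isCont[OF bounded_linear_matrix_vector_mult_left] by blast

section \<open>The Newton map of a strongly convex lower-level problem\<close>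

locale strongly_convex_lower_level =
  fixes g :: "(real^'n) \<times> (real^'p) \<Rightarrow> real"
    and Dg :: "(real^'n) \<times> (real^'p) \<Rightarrow> (real^'n) \<times> (real^'p)"
    and Hxy :: "(real^'n) \<times> (real^'p) \<Rightarrow> real^'p^'n"
    and Hyy :: "(real^'n) \<times> (real^'p) \<Rightarrow> real^'p^'p"
    and \<mu> Lg Qg :: real
    and H' :: "(real^'n) \<times> (real^'p) \<Rightarrow> ((real^'n) \<times> (real^'p)) \<Rightarrow>\<^sub>L (real^'p^'p)"
  assumes mu_pos: "\<mu> > 0"
    and g_grad: "\<And>z. (g has_derivative (\<lambda>d. Dg z \<bullet> d)) (at z)"
    and g_hess: "\<And>z. ((\<lambda>w. snd (Dg w)) has_derivative
                       (\<lambda>d. transpose (Hxy z) *v fst d + Hyy z *v snd d)) (at z)"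
    and strong_convex: "\<And>z v. \<mu> * (norm v)\<^sup>2 \<le> v \<bullet> (Hyy z *v v)"
    and grad_lip: "Lg-lipschitz_on UNIV Dg"
    and Hyy_lip: "Qg-lipschitz_on UNIV Hyy"
    and H'_der: "\<And>z. (Hyy has_derivative blinfun_apply (H' z)) (at z)"
    and H'_cont: "continuous_on UNIV H'"
begin

definition grad_y where "grad_y z = snd (Dg z)"
definition D_grad_y where "D_grad_y z d = transpose (Hxy z) *v fst d + Hyy z *v snd d"
definition Hyy_inv where "Hyy_inv z = matrix_inv (Hyy z)"
definition newton_dir where "newton_dir z = Hyy_inv z *v grad_y z"
definition DHyy where "DHyy z u = blinfun_apply (H' z) u"

lemma grad_y_has_derivative: "(grad_y has_derivative D_grad_y z) (at z)"
  using g_hess[of z] unfolding grad_y_def[abs_def] D_grad_y_def[abs_def] by simp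

lemma D_grad_y_snd: "D_grad_y z (0, a) = Hyy z *v a"
  by (simp add: D_grad_y_def)

lemma D_grad_y_fst: "D_grad_y z (c, 0) = transpose (Hxy z) *v c"
  by (simp add: D_grad_y_def)

lemma isCont_Hyy: "isCont Hyy z"
  using lipschitz_on_continuous_on[OF Hyy_lip] continuous_on_eq_continuous_at open_UNIV UNIV_I by blast

lemma isCont_DHyy: "isCont (\<lambda>w. DHyy w u) z"
proof -
  have "isCont H' z" using H'_cont continuous_on_eq_continuous_at open_UNIV UNIV_I by blast
  then show ?thesis unfolding DHyy_def by (intro continuous_intros) auto
qed

lemma linear_DHyy: "linear (DHyy z)"
  unfolding DHyy_def using blinfun.bounded_linear_right bounded_linear.linear by blast

lemma transpose_Hyy: "transpose (Hyy z) = Hyy z"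
proof (rule symmetric_matrix_if_inner_commute)
  fix a b
  have P: "((\<lambda>r::real. (1 / r) *\<^sub>R (Dg (z + r *\<^sub>R (0, b)) \<bullet> (0, a) - Dg z \<bullet> (0, a)))
            \<longlongrightarrow> D_grad_y z (0, a) \<bullet> b) (at 0)"
  proof (rule mixed_partial_tendsto[where F = g and DF = "\<lambda>w d. Dg w \<bullet> d" and DB = "\<lambda>w u. D_grad_y w u \<bullet> b"])
    show "(g has_derivative (\<lambda>d. Dg w \<bullet> d)) (at w)" for w by (rule g_grad)
    show "((\<lambda>w. Dg w \<bullet> (0, b)) has_derivative (\<lambda>u. D_grad_y w u \<bullet> b)) (at w)" for w
    proof -
      have "((\<lambda>w. grad_y w \<bullet> b) has_derivative (\<lambda>u. D_grad_y w u \<bullet> b)) (at w)"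
        by (rule has_derivative_inner_left[OF grad_y_has_derivative])
      then show ?thesis by (simp add: grad_y_def inner_Pair_0)
    qed
    show "isCont (\<lambda>w. D_grad_y w (0, a) \<bullet> b) z"
      unfolding D_grad_y_snd by (intro continuous_intros isCont_matrix_vector_mult_left isCont_Hyy)
  qed
  then have P': "((\<lambda>r::real. (1 / r) *\<^sub>R (grad_y (z + r *\<^sub>R (0, b)) - grad_y z) \<bullet> a) \<longlongrightarrow> (Hyy z *v a) \<bullet> b) (at 0)"
    by (simp add: grad_y_def inner_Pair_0 D_grad_y_snd inner_diff_left)
  have Q: "((\<lambda>r::real. (1 / r) *\<^sub>R (grad_y (z + r *\<^sub>R (0, b)) - grad_y z) \<bullet> a) \<longlongrightarrow> D_grad_y z (0, b) \<bullet> a) (at 0)"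
    by (intro tendsto_intros has_derivative_difference_quotient grad_y_has_derivative)
  show "(Hyy z *v a) \<bullet> b = (Hyy z *v b) \<bullet> a"
    using tendsto_unique[OF trivial_limit_at P' Q] by (simp add: D_grad_y_snd)
qed

lemma inj_Hyy: "inj ((*v) (Hyy z))"
proof (rule inj_onI)
  fix x y assume "Hyy z *v x = Hyy z *v y"
  then have "Hyy z *v (x - y) = 0" by (simp add: matrix_vector_mult_diff_distrib)
  then have "\<mu> * (norm (x - y))\<^sup>2 \<le> 0" using strong_convex[where z=z and v="x - y"] by simp
  then have "norm (x - y) = 0" using mu_pos by (simp add: mult_le_0_iff)
  then show "x = y" by simp
qed

lemma invertible_Hyy: "invertible (Hyy z)"
  using inj_Hyy matrix_left_invertible_injective invertible_left_inverse by blast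

lemma Hyy_inv_mult: "Hyy z ** Hyy_inv z = mat 1" "Hyy_inv z ** Hyy z = mat 1"
proof -
  have "\<exists>A'. Hyy z ** A' = mat 1 \<and> A' ** Hyy z = mat 1"
    using invertible_Hyy unfolding invertible_def by blast
  then have "Hyy z ** Hyy_inv z = mat 1 \<and> Hyy_inv z ** Hyy z = mat 1"
    unfolding Hyy_inv_def matrix_inv_def by (rule someI_ex)
  then show "Hyy z ** Hyy_inv z = mat 1" "Hyy_inv z ** Hyy z = mat 1" by auto
qed

lemma Hyy_inv_mv: "Hyy z *v (Hyy_inv z *v x) = x" "Hyy_inv z *v (Hyy z *v x) = x"
  by (simp_all add: matrix_vector_mul_assoc Hyy_inv_mult)

lemma transpose_Hyy_inv: "transpose (Hyy_inv z) = Hyy_inv z"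
proof -
  have "transpose (Hyy_inv z) ** Hyy z = mat 1"
    using arg_cong[OF Hyy_inv_mult(1), of transpose] by (simp add: matrix_transpose_mul transpose_Hyy)
  have "transpose (Hyy_inv z) = transpose (Hyy_inv z) ** (Hyy z ** Hyy_inv z)" by (simp add: Hyy_inv_mult)
  also have "\<dots> = (transpose (Hyy_inv z) ** Hyy z) ** Hyy_inv z" by (rule matrix_mul_assoc)
  finally show ?thesis using \<open>transpose (Hyy_inv z) ** Hyy z = mat 1\<close> by simp
qed

lemma norm_Hyy_inv_mv_le: "norm (Hyy_inv z *v x) \<le> norm x / \<mu>"
proof -
  define y where "y = Hyy_inv z *v x"
  have "Hyy z *v y = x" unfolding y_def by (rule Hyy_inv_mv)
  then have "\<mu> * (norm y)\<^sup>2 \<le> y \<bullet> x" using strong_convex[where z=z and v=y] by simp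
  also have "\<dots> \<le> norm y * norm x" by (rule norm_cauchy_schwarz)
  finally have "\<mu> * (norm y)\<^sup>2 \<le> norm y * norm x" .
  then have "\<mu> * norm y \<le> norm x"
    by (cases "norm y = 0") (auto simp: power2_eq_square mult.assoc[symmetric] intro: mult_right_le_imp_le)
  then show ?thesis unfolding y_def using mu_pos by (simp add: field_simps)
qed

lemma Hyy_difference_quotient: "((\<lambda>r::real. (1 / r) *\<^sub>R (Hyy (z + r *\<^sub>R u) - Hyy z)) \<longlongrightarrow> DHyy z u) (at 0)"
  unfolding DHyy_def by (rule has_derivative_difference_quotient[OF H'_der])

lemma transpose_DHyy: "transpose (DHyy z u) = DHyy z u"
proof -
  have L: "((\<lambda>r::real. transpose ((1 / r) *\<^sub>R (Hyy (z + r *\<^sub>R u) - Hyy z))) \<longlongrightarrow> transpose (DHyy z u)) (at 0)"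
    using bounded_linear.tendsto[OF bounded_linear_transpose Hyy_difference_quotient] .
  have "transpose ((1 / r) *\<^sub>R (Hyy (z + r *\<^sub>R u) - Hyy z)) = (1 / r) *\<^sub>R (Hyy (z + r *\<^sub>R u) - Hyy z)" for r
  proof -
    have lt: "linear (transpose :: real^'p^'p \<Rightarrow> real^'p^'p)" by (rule bounded_linear.linear[OF bounded_linear_transpose])
    have "transpose ((1 / r) *\<^sub>R (Hyy (z + r *\<^sub>R u) - Hyy z)) = (1 / r) *\<^sub>R (transpose (Hyy (z + r *\<^sub>R u)) - transpose (Hyy z))"
      by (simp only: linear_scale[OF lt] linear_diff[OF lt])
    then show ?thesis by (simp only: transpose_Hyy)
  qed
  then have "((\<lambda>r::real. (1 / r) *\<^sub>R (Hyy (z + r *\<^sub>R u) - Hyy z)) \<longlongrightarrow> transpose (DHyy z u)) (at 0)"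
    using L by simp
  then show ?thesis using tendsto_unique[OF trivial_limit_at] Hyy_difference_quotient by blast
qed

lemma Hyy_mv_has_derivative: "((\<lambda>w. Hyy w *v b) has_derivative (\<lambda>u. DHyy w u *v b)) (at w)"
  unfolding DHyy_def using bounded_linear.has_derivative[OF bounded_linear_matrix_vector_mult_left H'_der] .

lemma DHyy_snd_commute: "DHyy z (0, a) *v b = DHyy z (0, b) *v a"
proof -
  have P: "((\<lambda>r::real. (1 / r) *\<^sub>R (D_grad_y (z + r *\<^sub>R (0, b)) (0, a) - D_grad_y z (0, a))) \<longlongrightarrow> DHyy z (0, a) *v b) (at 0)"
  proof (rule mixed_partial_tendsto[where F = grad_y and DF = D_grad_y and DB = "\<lambda>w u. DHyy w u *v b"])
    show "(grad_y has_derivative D_grad_y w) (at w)" for w by (rule grad_y_has_derivative)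
    show "((\<lambda>w. D_grad_y w (0, b)) has_derivative (\<lambda>u. DHyy w u *v b)) (at w)" for w
      unfolding D_grad_y_snd by (rule Hyy_mv_has_derivative)
    show "isCont (\<lambda>w. DHyy w (0, a) *v b) z" by (intro isCont_matrix_vector_mult_left isCont_DHyy)
  qed
  have Q: "((\<lambda>r::real. ((1 / r) *\<^sub>R (Hyy (z + r *\<^sub>R (0, b)) - Hyy z)) *v a) \<longlongrightarrow> DHyy z (0, b) *v a) (at 0)"
    using bounded_linear.tendsto[OF bounded_linear_matrix_vector_mult_left Hyy_difference_quotient] .
  show ?thesis using tendsto_unique[OF trivial_limit_at P] Q by (simp add: D_grad_y_snd scaleR_diff_matrix_vector_mult)
qed

text \<open>\<open>Hxy\<close> is only Lipschitz. Its derivative in \<open>y\<close>, which enters \<open>JAx\<close>, is built from the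
  derivative of \<open>Hyy\<close> and identified as a limit by Peano's theorem applied to \<open>grad_y\<close>.\<close>
definition DHxy_y where "DHxy_y z v = (\<chi> i. DHyy z (axis i 1, 0) *v v)"

lemma transpose_Hxy_difference_quotient: "((\<lambda>r::real. transpose ((1 / r) *\<^sub>R (Hxy (z + r *\<^sub>R (0, v)) - Hxy z)) *v c) \<longlongrightarrow> DHyy z (c, 0) *v v) (at 0)"
proof -
  have P: "((\<lambda>r::real. (1 / r) *\<^sub>R (D_grad_y (z + r *\<^sub>R (0, v)) (c, 0) - D_grad_y z (c, 0))) \<longlongrightarrow> DHyy z (c, 0) *v v) (at 0)"
  proof (rule mixed_partial_tendsto[where F = grad_y and DF = D_grad_y and DB = "\<lambda>w u. DHyy w u *v v"])
    show "(grad_y has_derivative D_grad_y w) (at w)" for w by (rule grad_y_has_derivative)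
    show "((\<lambda>w. D_grad_y w (0, v)) has_derivative (\<lambda>u. DHyy w u *v v)) (at w)" for w
      unfolding D_grad_y_snd by (rule Hyy_mv_has_derivative)
    show "isCont (\<lambda>w. DHyy w (c, 0) *v v) z" by (intro isCont_matrix_vector_mult_left isCont_DHyy)
  qed
  have lt: "linear (transpose :: real^'p^'n \<Rightarrow> real^'n^'p)" by (rule bounded_linear.linear[OF bounded_linear_transpose])
  have "transpose ((1 / r) *\<^sub>R (Hxy (z + r *\<^sub>R (0, v)) - Hxy z)) *v c
        = (1 / r) *\<^sub>R (D_grad_y (z + r *\<^sub>R (0, v)) (c, 0) - D_grad_y z (c, 0))" for r
  proof -
    have "transpose ((1 / r) *\<^sub>R (Hxy (z + r *\<^sub>R (0, v)) - Hxy z)) =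
          (1 / r) *\<^sub>R (transpose (Hxy (z + r *\<^sub>R (0, v))) - transpose (Hxy z))"
      by (simp only: linear_scale[OF lt] linear_diff[OF lt])
    then show ?thesis by (simp only: scaleR_diff_matrix_vector_mult D_grad_y_fst)
  qed
  then show ?thesis using P by simp
qed

lemma Hxy_difference_quotient: "((\<lambda>r::real. (1 / r) *\<^sub>R (Hxy (z + r *\<^sub>R (0, v)) - Hxy z)) \<longlongrightarrow> DHxy_y z v) (at 0)"
proof (rule vec_tendstoI)
  fix i
  have "((\<lambda>r::real. transpose ((1 / r) *\<^sub>R (Hxy (z + r *\<^sub>R (0, v)) - Hxy z)) *v axis i 1) \<longlongrightarrow> DHyy z (axis i 1, 0) *v v) (at 0)"
    by (rule transpose_Hxy_difference_quotient)
  then show "((\<lambda>r. ((1 / r) *\<^sub>R (Hxy (z + r *\<^sub>R (0, v)) - Hxy z)) $ i) \<longlongrightarrow> DHxy_y z v $ i) (at 0)"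
    by (simp only: transpose_axis DHxy_y_def vec_lambda_beta)
qed

lemma transpose_DHxy_y: "transpose (DHxy_y z v) *v c = DHyy z (c, 0) *v v"
proof -
  have "((\<lambda>r::real. transpose ((1 / r) *\<^sub>R (Hxy (z + r *\<^sub>R (0, v)) - Hxy z)) *v c) \<longlongrightarrow> transpose (DHxy_y z v) *v c) (at 0)"
    using bounded_linear.tendsto[OF bounded_linear_matrix_vector_mult_left bounded_linear.tendsto[OF bounded_linear_transpose Hxy_difference_quotient]] .
  then show ?thesis using tendsto_unique[OF trivial_limit_at] transpose_Hxy_difference_quotient by blast
qed

lemma Pair_fst_snd_add_scaleR: "(fst z, snd z + t *\<^sub>R d) = z + t *\<^sub>R (0, d)"
  by (simp add: prod_eq_iff)

lemma dir_deriv_Hxy: "dir_deriv_y Hxy z v = DHxy_y z v"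
  unfolding dir_deriv_y_def Pair_fst_snd_add_scaleR using tendsto_Lim[OF trivial_limit_at Hxy_difference_quotient] by simp

lemma dir_deriv_Hyy: "dir_deriv_y Hyy z v = DHyy z (0, v)"
  unfolding dir_deriv_y_def Pair_fst_snd_add_scaleR using tendsto_Lim[OF trivial_limit_at Hyy_difference_quotient[of z "(0, v)"]] by simp

definition Dnewton_dir where "Dnewton_dir z u = Hyy_inv z *v (D_grad_y z u - DHyy z u *v newton_dir z)"

lemma bounded_linear_D_grad_y: "bounded_linear (D_grad_y z)"
  using grad_y_has_derivative has_derivative_bounded_linear by blast

lemma bounded_linear_DHyy: "bounded_linear (DHyy z)"
  unfolding DHyy_def by (rule blinfun.bounded_linear_right)

lemma bounded_linear_Dnewton_dir: "bounded_linear (Dnewton_dir z)"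
proof -
  have "bounded_linear (\<lambda>u. DHyy z u *v newton_dir z)"
    using bounded_linear_compose[OF bounded_linear_matrix_vector_mult_left bounded_linear_DHyy] .
  then have "bounded_linear (\<lambda>u. D_grad_y z u - DHyy z u *v newton_dir z)"
    by (intro bounded_linear_sub bounded_linear_D_grad_y)
  then show ?thesis unfolding Dnewton_dir_def[abs_def]
    using bounded_linear_compose[OF matrix_vector_mul_bounded_linear] by blast
qed

lemma Hyy_newton_dir: "Hyy z *v newton_dir z = grad_y z"
  unfolding newton_dir_def by (rule Hyy_inv_mv)

lemma newton_dir_remainder_eq:
  "newton_dir w - newton_dir z - Dnewton_dir z (w - z) =
     Hyy_inv w *v ((grad_y w - grad_y z - D_grad_y z (w - z)) - (Hyy w - Hyy z - DHyy z (w - z)) *v newton_dir z)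
     + Hyy_inv w *v ((Hyy z - Hyy w) *v (Hyy_inv z *v (D_grad_y z (w - z) - DHyy z (w - z) *v newton_dir z)))"
proof -
  define h where "h = w - z"
  define Y where "Y = D_grad_y z h - DHyy z h *v newton_dir z"
  have a: "Hyy_inv w *v ((grad_y w - grad_y z - D_grad_y z h) - (Hyy w - Hyy z - DHyy z h) *v newton_dir z) = newton_dir w - newton_dir z - Hyy_inv w *v Y"
  proof -
    have eq1: "(grad_y w - grad_y z - D_grad_y z h) - (Hyy w - Hyy z - DHyy z h) *v newton_dir z
          = grad_y w - Hyy w *v newton_dir z + (Hyy z *v newton_dir z - grad_y z) - Y"
      unfolding Y_def by (simp add: algebra_simps)
    have eq: "(grad_y w - grad_y z - D_grad_y z h) - (Hyy w - Hyy z - DHyy z h) *v newton_dir z = grad_y w - Hyy w *v newton_dir z - Y"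
      unfolding eq1 by (simp add: Hyy_newton_dir)
    have "Hyy_inv w *v ((grad_y w - grad_y z - D_grad_y z h) - (Hyy w - Hyy z - DHyy z h) *v newton_dir z)
                  = Hyy_inv w *v (grad_y w - Hyy w *v newton_dir z - Y)" by (simp only: eq)
    also have "\<dots> = Hyy_inv w *v grad_y w - Hyy_inv w *v (Hyy w *v newton_dir z) - Hyy_inv w *v Y"
      by (simp only: matrix_vector_mult_diff_distrib)
    also have "\<dots> = newton_dir w - newton_dir z - Hyy_inv w *v Y" by (simp add: Hyy_inv_mv newton_dir_def)
    finally show ?thesis .
  qed
  have b: "Hyy_inv w *v ((Hyy z - Hyy w) *v (Hyy_inv z *v Y)) = Hyy_inv w *v Y - Hyy_inv z *v Y"
    by (simp add: matrix_vector_mult_diff_rdistrib matrix_vector_mult_diff_distrib Hyy_inv_mv)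
  have "newton_dir w - newton_dir z - Dnewton_dir z h = (newton_dir w - newton_dir z - Hyy_inv w *v Y) + (Hyy_inv w *v Y - Hyy_inv z *v Y)"
    unfolding Dnewton_dir_def Y_def by simp
  then show ?thesis using a b unfolding h_def Y_def by simp
qed

lemma newton_dir_remainder_le:
  fixes w z
  defines "Y \<equiv> D_grad_y z (w - z) - DHyy z (w - z) *v newton_dir z"
  shows "norm (newton_dir w - newton_dir z - Dnewton_dir z (w - z))
    \<le> (norm (grad_y w - grad_y z - D_grad_y z (w - z))
        + norm (Hyy w - Hyy z - DHyy z (w - z)) * norm (newton_dir z)) / \<mu>
      + norm (Hyy w - Hyy z) * norm Y / \<mu>\<^sup>2"
proof -
  define E1 where "E1 = grad_y w - grad_y z - D_grad_y z (w - z)"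
  define E2 where "E2 = Hyy w - Hyy z - DHyy z (w - z)"
  have "norm (Hyy_inv w *v (E1 - E2 *v newton_dir z)) \<le> norm (E1 - E2 *v newton_dir z) / \<mu>"
    by (rule norm_Hyy_inv_mv_le)
  also have "\<dots> \<le> (norm E1 + norm E2 * norm (newton_dir z)) / \<mu>"
    using mu_pos norm_triangle_ineq4[of E1 "E2 *v newton_dir z"] norm_matrix_vector_mult_le[of E2 "newton_dir z"]
    by (intro divide_right_mono) auto
  finally have 1: "norm (Hyy_inv w *v (E1 - E2 *v newton_dir z)) \<le> (norm E1 + norm E2 * norm (newton_dir z)) / \<mu>" .
  have "norm (Hyy_inv w *v ((Hyy z - Hyy w) *v (Hyy_inv z *v Y))) \<le> norm ((Hyy z - Hyy w) *v (Hyy_inv z *v Y)) / \<mu>"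
    by (rule norm_Hyy_inv_mv_le)
  also have "\<dots> \<le> norm (Hyy z - Hyy w) * (norm Y / \<mu>) / \<mu>"
  proof -
    have "norm ((Hyy z - Hyy w) *v (Hyy_inv z *v Y)) \<le> norm (Hyy z - Hyy w) * (norm Y / \<mu>)"
      by (rule order_trans[OF norm_matrix_vector_mult_le mult_left_mono[OF norm_Hyy_inv_mv_le norm_ge_zero]])
    then show ?thesis using mu_pos by (intro divide_right_mono) auto
  qed
  also have "\<dots> = norm (Hyy w - Hyy z) * norm Y / \<mu>\<^sup>2" by (simp add: norm_minus_commute power2_eq_square)
  finally have 2: "norm (Hyy_inv w *v ((Hyy z - Hyy w) *v (Hyy_inv z *v Y))) \<le> norm (Hyy w - Hyy z) * norm Y / \<mu>\<^sup>2" .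
  show ?thesis
    using newton_dir_remainder_eq[of w z] norm_triangle_ineq add_mono[OF 1 2]
    unfolding E1_def E2_def Y_def by (smt (verit))
qed

lemma newton_dir_has_derivative: "(newton_dir has_derivative Dnewton_dir z) (at z)"
  unfolding has_derivative_iff_norm
proof (intro conjI)
  show "bounded_linear (Dnewton_dir z)" by (rule bounded_linear_Dnewton_dir)
  have "bounded_linear (\<lambda>u. D_grad_y z u - DHyy z u *v newton_dir z)"
    using bounded_linear_compose[OF bounded_linear_matrix_vector_mult_left bounded_linear_DHyy]
    by (intro bounded_linear_sub bounded_linear_D_grad_y) auto
  then obtain CY where CY: "\<And>h. norm (D_grad_y z h - DHyy z h *v newton_dir z) \<le> norm h * CY"
    using bounded_linear.bounded by blast
  define n1 where "n1 w = norm (grad_y w - grad_y z - D_grad_y z (w - z)) / norm (w - z)" for w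
  define n2 where "n2 w = norm (Hyy w - Hyy z - DHyy z (w - z)) / norm (w - z)" for w
  define bound where "bound w = (n1 w + n2 w * norm (newton_dir z)) / \<mu> + CY / \<mu>\<^sup>2 * norm (Hyy w - Hyy z)" for w
  have "(n1 \<longlongrightarrow> 0) (at z)" "(n2 \<longlongrightarrow> 0) (at z)"
    using grad_y_has_derivative[of z] H'_der[of z] unfolding has_derivative_iff_norm n1_def n2_def DHyy_def
    by blast+
  moreover have "((\<lambda>w. norm (Hyy w - Hyy z)) \<longlongrightarrow> 0) (at z)"
    using isCont_Hyy[of z] by (simp add: isCont_def LIM_zero tendsto_norm_zero)
  ultimately have "(bound \<longlongrightarrow> (0 + 0 * norm (newton_dir z)) / \<mu> + CY / \<mu>\<^sup>2 * 0) (at z)"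
    unfolding bound_def by (intro tendsto_intros) (use mu_pos in auto)
  then have "(bound \<longlongrightarrow> 0) (at z)" by simp
  then show "((\<lambda>w. norm (newton_dir w - newton_dir z - Dnewton_dir z (w - z)) / norm (w - z)) \<longlongrightarrow> 0) (at z)"
  proof (rule Lim_null_comparison[rotated])
    show "\<forall>\<^sub>F w in at z. norm (norm (newton_dir w - newton_dir z - Dnewton_dir z (w - z)) / norm (w - z)) \<le> bound w"
    proof (rule eventually_mono[OF eventually_neq_at_within[of z]])
      fix w assume "w \<noteq> z"
      then have nh: "norm (w - z) > 0" by simp
      have "norm (newton_dir w - newton_dir z - Dnewton_dir z (w - z))
          \<le> (norm (grad_y w - grad_y z - D_grad_y z (w - z))
              + norm (Hyy w - Hyy z - DHyy z (w - z)) * norm (newton_dir z)) / \<mu>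
            + norm (Hyy w - Hyy z) * (norm (w - z) * CY) / \<mu>\<^sup>2"
        using newton_dir_remainder_le[of w z] CY[of "w - z"] mu_pos
        by (smt (verit) divide_right_mono mult_left_mono norm_ge_zero zero_le_power2)
      also have "\<dots> = bound w * norm (w - z)"
        unfolding bound_def n1_def n2_def using nh mu_pos by (simp add: field_simps)
      finally show "norm (norm (newton_dir w - newton_dir z - Dnewton_dir z (w - z)) / norm (w - z)) \<le> bound w"
        using nh by (simp add: divide_le_eq)
    qed
  qed
qed

definition Phi where "Phi z = (fst z, Amap Dg Hyy z)"
definition DPhi where "DPhi z u = (fst u, snd u - Dnewton_dir z u)"
definition DPhi_adj where "DPhi_adj z d = (fst d + JAx Dg Hxy Hyy z *v snd d, JAy Dg Hyy z *v snd d)"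
definition penalty where "penalty \<beta> z = \<beta> / 2 * (norm (grad_y z))\<^sup>2"
definition grad_penalty where "grad_penalty \<beta> z = (\<beta> *\<^sub>R (Hxy z *v grad_y z), \<beta> *\<^sub>R (Hyy z *v grad_y z))"

lemma Amap_eq: "Amap Dg Hyy z = snd z - newton_dir z"
  by (simp add: Amap_def newton_dir_def Hyy_inv_def grad_y_def)

lemma Phi_eq: "Phi = (\<lambda>z. (fst z, snd z - newton_dir z))"
  by (simp add: Phi_def[abs_def] Amap_eq)

lemma Phi_has_derivative: "(Phi has_derivative DPhi z) (at z)"
  unfolding Phi_eq DPhi_def[abs_def]
  by (auto intro!: derivative_eq_intros newton_dir_has_derivative)

lemma JAx_eq: "JAx Dg Hxy Hyy z = - (Hxy z ** Hyy_inv z) + DHxy_y z (newton_dir z) ** Hyy_inv z"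
  by (simp add: JAx_def dir_deriv_Hxy Hyy_inv_def[symmetric] grad_y_def[symmetric] newton_dir_def[symmetric])

lemma JAy_eq: "JAy Dg Hyy z = DHyy z (0, newton_dir z) ** Hyy_inv z"
  by (simp add: JAy_def dir_deriv_Hyy Hyy_inv_def[symmetric] grad_y_def[symmetric] newton_dir_def[symmetric])

lemma DPhi_adjoint: "DPhi z u \<bullet> d = u \<bullet> DPhi_adj z d"
proof -
  obtain ux uy where u: "u = (ux, uy)" by force
  obtain dx dy where d: "d = (dx, dy)" by force
  define q where "q = Hyy_inv z *v dy"
  have Hq: "Hyy z *v q = dy" unfolding q_def by (rule Hyy_inv_mv)
  define X where "X = D_grad_y z u - DHyy z u *v newton_dir z"
  have DVd: "Dnewton_dir z u \<bullet> dy = X \<bullet> q"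
    unfolding Dnewton_dir_def X_def q_def by (simp only: inner_commute[of "Hyy_inv z *v _"] inner_matrix_vector_mult_transpose transpose_Hyy_inv)
  have DHsplit: "DHyy z u = DHyy z (ux, 0) + DHyy z (0, uy)"
  proof -
    have "u = (ux, 0) + (0, uy)" using u by simp
    then show ?thesis using linear_add[OF linear_DHyy] by metis
  qed
  have t1: "(transpose (Hxy z) *v ux) \<bullet> q = ux \<bullet> (Hxy z *v q)"
    using inner_matrix_vector_mult_transpose[of "transpose (Hxy z)" ux q] by simp
  have t2: "(Hyy z *v uy) \<bullet> q = uy \<bullet> dy"
    using inner_matrix_vector_mult_transpose[of "Hyy z" uy q] by (simp only: transpose_Hyy Hq)
  have t3: "(DHyy z (ux, 0) *v newton_dir z) \<bullet> q = ux \<bullet> (DHxy_y z (newton_dir z) *v q)"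
    using inner_matrix_vector_mult_transpose[of "transpose (DHxy_y z (newton_dir z))" ux q] by (simp only: transpose_transpose transpose_DHxy_y)
  have t4: "(DHyy z (0, uy) *v newton_dir z) \<bullet> q = uy \<bullet> (DHyy z (0, newton_dir z) *v q)"
    using inner_matrix_vector_mult_transpose[of "DHyy z (0, newton_dir z)" uy q] by (simp only: DHyy_snd_commute transpose_DHyy)
  have X_q: "X \<bullet> q = ux \<bullet> (Hxy z *v q) + uy \<bullet> dy - ux \<bullet> (DHxy_y z (newton_dir z) *v q) - uy \<bullet> (DHyy z (0, newton_dir z) *v q)"
    unfolding X_def D_grad_y_def DHsplit using t1 t2 t3 t4 u
    by (simp add: inner_add_left inner_diff_left matrix_vector_mult_add_rdistrib)
  have neg: "(- A) *v x = - (A *v x)" for A :: "real^'p^'n" and x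
    by (simp add: matrix_vector_mult_def vec_eq_iff sum_negf)
  have JX: "JAx Dg Hxy Hyy z *v dy = - (Hxy z *v q) + DHxy_y z (newton_dir z) *v q"
    unfolding JAx_eq q_def by (simp add: matrix_vector_mult_add_rdistrib matrix_vector_mul_assoc[symmetric] neg matrix_vector_mult_diff_rdistrib)
  have JY: "JAy Dg Hyy z *v dy = DHyy z (0, newton_dir z) *v q"
    unfolding JAy_eq q_def by (simp add: matrix_vector_mul_assoc[symmetric])
  have "DPhi z u \<bullet> d = ux \<bullet> dx + uy \<bullet> dy - Dnewton_dir z u \<bullet> dy"
    unfolding DPhi_def u d by (simp add: inner_diff_left)
  also have "\<dots> = ux \<bullet> dx - ux \<bullet> (Hxy z *v q) + ux \<bullet> (DHxy_y z (newton_dir z) *v q) + uy \<bullet> (DHyy z (0, newton_dir z) *v q)"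
    unfolding DVd X_q by simp
  also have "\<dots> = u \<bullet> DPhi_adj z d"
    unfolding DPhi_adj_def u d using JX JY by (simp add: inner_add_right inner_diff_right)
  finally show ?thesis .
qed

lemma penalty_has_derivative: "(penalty \<beta> has_derivative (\<lambda>u. grad_penalty \<beta> z \<bullet> u)) (at z)"
proof -
  have e: "penalty \<beta> = (\<lambda>z. \<beta> / 2 * (grad_y z \<bullet> grad_y z))" by (simp add: penalty_def[abs_def] dot_square_norm)
  have "((\<lambda>z. \<beta> / 2 * (grad_y z \<bullet> grad_y z)) has_derivative (\<lambda>h. \<beta> / 2 * (grad_y z \<bullet> D_grad_y z h + D_grad_y z h \<bullet> grad_y z))) (at z)"
    by (intro has_derivative_mult_right has_derivative_inner grad_y_has_derivative)
  moreover have "(\<lambda>h. \<beta> / 2 * (grad_y z \<bullet> D_grad_y z h + D_grad_y z h \<bullet> grad_y z)) = (\<lambda>u. grad_penalty \<beta> z \<bullet> u)"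
  proof
    fix h :: "(real^'n) \<times> (real^'p)"
    obtain hx hy where h: "h = (hx, hy)" by force
    have a: "D_grad_y z h \<bullet> grad_y z = hx \<bullet> (Hxy z *v grad_y z) + hy \<bullet> (Hyy z *v grad_y z)"
    proof -
      have "(transpose (Hxy z) *v hx) \<bullet> grad_y z = hx \<bullet> (Hxy z *v grad_y z)"
        using inner_matrix_vector_mult_transpose[of "transpose (Hxy z)" hx "grad_y z"] by simp
      moreover have "(Hyy z *v hy) \<bullet> grad_y z = hy \<bullet> (Hyy z *v grad_y z)"
        using inner_matrix_vector_mult_transpose[of "Hyy z" hy "grad_y z"] by (simp only: transpose_Hyy)
      ultimately show ?thesis unfolding D_grad_y_def h by (simp add: inner_add_left)
    qed
    show "\<beta> / 2 * (grad_y z \<bullet> D_grad_y z h + D_grad_y z h \<bullet> grad_y z) = grad_penalty \<beta> z \<bullet> h"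
      unfolding grad_penalty_def h inner_commute[of "grad_y z"] using a h by (simp add: inner_commute algebra_simps)
  qed
  ultimately show ?thesis unfolding e by simp
qed

lemma Dh_eq: "Dh Df Dg Hxy Hyy \<beta> z = (\<lambda>v. DPhi_adj z v + grad_penalty \<beta> z) ` Df (Phi z)"
proof -
  have "(\<lambda>(dx, dy). (dx + JAx Dg Hxy Hyy z *v dy + \<beta> *\<^sub>R (Hxy z *v snd (Dg z)),
                  JAy Dg Hyy z *v dy + \<beta> *\<^sub>R (Hyy z *v snd (Dg z)))) = (\<lambda>v. DPhi_adj z v + grad_penalty \<beta> z)"
    by (auto simp: fun_eq_iff DPhi_adj_def grad_penalty_def grad_y_def)
  then show ?thesis unfolding Dh_def Phi_def by simp
qed

lemma grad_y_lipschitz: "norm (grad_y w - grad_y z) \<le> Lg * norm (w - z)"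
proof -
  have "norm (grad_y w - grad_y z) \<le> norm (Dg w - Dg z)"
    unfolding grad_y_def by (metis norm_snd_le prod.collapse snd_diff)
  also have "\<dots> \<le> Lg * norm (w - z)" using lipschitz_onD[OF grad_lip] by (simp add: dist_norm)
  finally show ?thesis .
qed

lemma norm_grad_y_le:
  assumes "norm z \<le> R"
  shows "norm (grad_y z) \<le> norm (grad_y 0) + Lg * R"
proof -
  have "Lg * norm z \<le> Lg * R" using assms lipschitz_on_nonneg[OF grad_lip] by (rule mult_left_mono)
  then show ?thesis using grad_y_lipschitz[of z 0] norm_triangle_sub[of "grad_y z" "grad_y 0"] by simp
qed

lemma newton_dir_lipschitz: "\<exists>L. L-lipschitz_on (cball 0 R) newton_dir"
proof -
  define CV where "CV = max 0 ((norm (grad_y 0) + Lg * R) / \<mu>)"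
  have Vz: "norm (newton_dir z) \<le> CV" if "norm z \<le> R" for z
    using norm_Hyy_inv_mv_le[of z "grad_y z"] norm_grad_y_le[OF that] mu_pos unfolding newton_dir_def CV_def
    by (smt (verit) divide_right_mono)
  have "norm (newton_dir w - newton_dir z) \<le> (Lg + Qg * CV) / \<mu> * norm (w - z)"
    if "norm w \<le> R" "norm z \<le> R" for w z
  proof -
    have "newton_dir w - newton_dir z = Hyy_inv w *v (grad_y w - grad_y z - (Hyy w - Hyy z) *v newton_dir z)"
      by (simp add: matrix_vector_mult_diff_distrib matrix_vector_mult_diff_rdistrib Hyy_inv_mv Hyy_newton_dir newton_dir_def)
    then have "norm (newton_dir w - newton_dir z) \<le> norm (grad_y w - grad_y z - (Hyy w - Hyy z) *v newton_dir z) / \<mu>"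
      using norm_Hyy_inv_mv_le by simp
    also have "\<dots> \<le> (Lg * norm (w - z) + Qg * norm (w - z) * CV) / \<mu>"
    proof (rule divide_right_mono)
      have "norm ((Hyy w - Hyy z) *v newton_dir z) \<le> Qg * norm (w - z) * CV"
        using norm_matrix_vector_mult_le[of "Hyy w - Hyy z" "newton_dir z"] lipschitz_onD[OF Hyy_lip, of w z]
          lipschitz_on_nonneg[OF Hyy_lip] Vz[OF that(2)]
        by (smt (verit) dist_norm mult_mono norm_ge_zero UNIV_I)
      then show "norm (grad_y w - grad_y z - (Hyy w - Hyy z) *v newton_dir z) \<le> Lg * norm (w - z) + Qg * norm (w - z) * CV"
        using grad_y_lipschitz[of w z] norm_triangle_ineq4[of "grad_y w - grad_y z" "(Hyy w - Hyy z) *v newton_dir z"]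
        by linarith
    qed (use mu_pos in simp)
    finally show ?thesis by (simp add: field_simps)
  qed
  moreover have "(Lg + Qg * CV) / \<mu> \<ge> 0"
    using lipschitz_on_nonneg[OF grad_lip] lipschitz_on_nonneg[OF Hyy_lip] mu_pos unfolding CV_def by simp
  ultimately show ?thesis by (intro exI lipschitz_onI) (auto simp: dist_norm)
qed

lemma Phi_lipschitz: "\<exists>L. L-lipschitz_on (cball 0 R) Phi"
proof -
  obtain L where L: "L-lipschitz_on (cball 0 R) newton_dir" using newton_dir_lipschitz by blast
  have fst: "1-lipschitz_on (cball 0 R) (\<lambda>z. fst z)" and snd: "1-lipschitz_on (cball 0 R) (\<lambda>z. snd z)"
    by (intro lipschitz_onI; simp only: mult_1_left dist_fst_le dist_snd_le zero_le_one)+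
  from lipschitz_on_Pair[OF fst lipschitz_on_diff[OF snd L]] show ?thesis unfolding Phi_eq by blast
qed

lemma penalty_lipschitz: "\<exists>L. L-lipschitz_on (cball 0 R) (penalty \<beta>)"
proof -
  define CG where "CG = norm (grad_y 0) + Lg * max 0 R"
  have CG0: "CG \<ge> 0" using lipschitz_on_nonneg[OF grad_lip] unfolding CG_def by simp
  have "\<bar>penalty \<beta> w - penalty \<beta> z\<bar> \<le> \<bar>\<beta>\<bar> * CG * Lg * norm (w - z)"
    if "norm w \<le> R" "norm z \<le> R" for w z
  proof -
    have gw: "norm (grad_y w) \<le> CG" and gz: "norm (grad_y z) \<le> CG"
      using norm_grad_y_le[of _ "max 0 R"] that unfolding CG_def by auto
    have eq: "penalty \<beta> w - penalty \<beta> z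
        = \<beta> / 2 * ((norm (grad_y w) + norm (grad_y z)) * (norm (grad_y w) - norm (grad_y z)))"
      unfolding penalty_def by (simp add: power2_eq_square algebra_simps)
    have "\<bar>penalty \<beta> w - penalty \<beta> z\<bar>
        = \<bar>\<beta>\<bar> / 2 * ((norm (grad_y w) + norm (grad_y z)) * \<bar>norm (grad_y w) - norm (grad_y z)\<bar>)"
      unfolding eq abs_mult by (simp add: abs_of_nonneg)
    also have "\<dots> \<le> \<bar>\<beta>\<bar> / 2 * ((2 * CG) * (Lg * norm (w - z)))"
      using gw gz norm_triangle_ineq3[of "grad_y w" "grad_y z"] grad_y_lipschitz[of w z] CG0
      by (intro mult_left_mono mult_mono) auto
    finally show ?thesis by (simp add: algebra_simps)
  qed
  moreover have "\<bar>\<beta>\<bar> * CG * Lg \<ge> 0"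
    using lipschitz_on_nonneg[OF grad_lip] CG0 by simp
  ultimately show ?thesis by (intro exI lipschitz_onI) (auto simp: dist_norm dist_real_def)
qed

end

section \<open>The chain rule for \<open>h\<close> along absolutely continuous curves\<close>

lemma cSup_image_affine:
  fixes g :: "'a \<Rightarrow> real"
  assumes "c > 0" "X \<noteq> {}" "bdd_above (g ` X)"
  shows "Sup ((\<lambda>v. c * g v + d) ` X) = c * Sup (g ` X) + d"
proof -
  have "mono (\<lambda>x. c * x + d)" using assms(1) by (auto intro!: monoI)
  moreover have "continuous (at_left (Sup (g ` X))) (\<lambda>x. c * x + d)" by (intro continuous_intros)
  ultimately have "c * Sup (g ` X) + d = Sup ((\<lambda>x. c * x + d) ` g ` X)"
    using assms(2,3) by (intro continuous_at_Sup_mono) auto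
  then show ?thesis by (simp add: image_image)
qed

lemma bdd_above_inner_image_compact:
  fixes X :: "'a::real_inner set"
  assumes "compact X"
  shows "bdd_above ((\<lambda>v. w \<bullet> v) ` X)"
  using assms by (intro bounded_imp_bdd_above compact_imp_bounded compact_continuous_image continuous_intros)

text \<open>The potential identity only controls \<open>Sup \<langle>c', v\<rangle>\<close>; running the curve backwards turns
  this into \<open>Sup \<langle>-c', v\<rangle>\<close>, which is what condition (f) bounds from below when \<open>-c'\<close> lies
  in the field.\<close>
lemma is_potential_has_integral_reversed:
  fixes f :: "'a::euclidean_space \<Rightarrow> real" and c :: "real \<Rightarrow> 'a"
  assumes pot: "is_potential f D" and D: "\<And>z. D z \<noteq> {} \<and> compact (D z)"
    and ac: "abs_cont_on_interval 0 t c" and t: "t > 0"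
    and N: "negligible N" and diff: "\<And>\<sigma>. \<sigma> \<in> {0..t} - N \<Longrightarrow> c differentiable (at \<sigma>)"
  shows "((\<lambda>\<sigma>. Sup ((\<lambda>v. - vector_derivative c (at \<sigma>) \<bullet> v) ` D (c \<sigma>))) has_integral f (c 0) - f (c t)) {0..t}"
proof -
  define r where "r = (\<lambda>\<tau>. c (t * (1 - \<tau>)))"
  define S where "S \<tau> = Sup ((\<lambda>v. vector_derivative r (at \<tau>) \<bullet> v) ` D (r \<tau>))" for \<tau>
  have "(S has_integral f (r 1) - f (r 0)) {0..1}"
    using pot abs_cont_on_interval_reflect_scale[OF ac t] unfolding is_potential_def S_def r_def by blast
  then have "((\<lambda>x. S ((- 1 / t) *\<^sub>R x + 1)) has_integral (1 / \<bar>- 1 / t\<bar> ^ DIM(real)) *\<^sub>R (f (r 1) - f (r 0)))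
      ((\<lambda>x. (1 / (- 1 / t)) *\<^sub>R x + - ((1 / (- 1 / t)) *\<^sub>R 1)) ` cbox 0 1)"
    using t by (intro has_integral_affinity) auto
  moreover have "(\<lambda>x. (1 / (- 1 / t)) *\<^sub>R x + - ((1 / (- 1 / t)) *\<^sub>R 1)) ` cbox 0 1 = {0..t}"
    using t image_affinity_atLeastAtMost[of "- t" t 0 1] by (simp add: algebra_simps)
  ultimately have "((\<lambda>\<sigma>. S (1 - \<sigma> / t)) has_integral t * f (c 0) - t * f (c t)) {0..t}"
    using t by (simp add: r_def algebra_simps)
  moreover have "(1 / t) * (t * f (c 0) - t * f (c t)) = f (c 0) - f (c t)"
    using t by (simp add: right_diff_distrib[symmetric])
  ultimately have "((\<lambda>\<sigma>. (1 / t) * S (1 - \<sigma> / t)) has_integral f (c 0) - f (c t)) {0..t}"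
    using has_integral_mult_right by metis
  then show ?thesis
  proof (rule has_integral_spike[OF N, rotated])
    fix \<sigma> assume \<sigma>: "\<sigma> \<in> {0..t} - N"
    define c' where "c' = vector_derivative c (at \<sigma>)"
    have "(c has_vector_derivative c') (at \<sigma>)"
      using diff[OF \<sigma>] vector_derivative_works unfolding c'_def by blast
    moreover have "((\<lambda>\<tau>. t * (1 - \<tau>)) has_vector_derivative - t) (at (1 - \<sigma> / t))"
      by (auto intro!: derivative_eq_intros simp: has_real_derivative_iff_has_vector_derivative[symmetric])
    ultimately have "(r has_vector_derivative (- t) *\<^sub>R c') (at (1 - \<sigma> / t))"
      using vector_diff_chain_at[of "\<lambda>\<tau>. t * (1 - \<tau>)" "- t" "1 - \<sigma> / t" c c'] t
      unfolding r_def by (simp add: o_def)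
    then have "S (1 - \<sigma> / t) = Sup ((\<lambda>v. t * (- c' \<bullet> v) + 0) ` D (c \<sigma>))"
      unfolding S_def using t by (simp add: vector_derivative_at r_def)
    also have "\<dots> = t * Sup ((\<lambda>v. - c' \<bullet> v) ` D (c \<sigma>)) + 0"
      using t D bdd_above_inner_image_compact[of "D (c \<sigma>)" "- c'"] by (intro cSup_image_affine) auto
    finally show "Sup ((\<lambda>v. - vector_derivative c (at \<sigma>) \<bullet> v) ` D (c \<sigma>)) = (1 / t) * S (1 - \<sigma> / t)"
      using t unfolding c'_def by simp
  qed
qed

context strongly_convex_lower_level
begin

lemma Sup_Dh_inner_eq:
  assumes "Df (Phi z) \<noteq> {}" "compact (Df (Phi z))"
  shows "Sup ((\<lambda>\<zeta>. \<zeta> \<bullet> w) ` Dh Df Dg Hxy Hyy \<beta> z)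
    = Sup ((\<lambda>v. DPhi z w \<bullet> v) ` Df (Phi z)) + grad_penalty \<beta> z \<bullet> w"
proof -
  have "(DPhi_adj z v + grad_penalty \<beta> z) \<bullet> w = 1 * (DPhi z w \<bullet> v) + grad_penalty \<beta> z \<bullet> w" for v
    by (simp add: inner_add_left DPhi_adjoint inner_commute[of "DPhi_adj z v" w])
  then have eq: "(\<lambda>\<zeta>. \<zeta> \<bullet> w) ` Dh Df Dg Hxy Hyy \<beta> z
      = (\<lambda>v. 1 * (DPhi z w \<bullet> v) + grad_penalty \<beta> z \<bullet> w) ` Df (Phi z)"
    unfolding Dh_eq image_image by simp
  have "Sup ((\<lambda>v. 1 * (DPhi z w \<bullet> v) + grad_penalty \<beta> z \<bullet> w) ` Df (Phi z))
      = 1 * Sup ((\<lambda>v. DPhi z w \<bullet> v) ` Df (Phi z)) + grad_penalty \<beta> z \<bullet> w"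
    using assms bdd_above_inner_image_compact[OF assms(2)] by (intro cSup_image_affine) auto
  then show ?thesis unfolding eq by (simp only: mult_1)
qed

lemma hfun_has_integral_reversed:
  assumes pot: "is_potential f Df" and Df: "\<And>z. Df z \<noteq> {} \<and> compact (Df z)"
    and ac: "abs_cont_on_interval 0 t \<gamma>" and t: "t > 0" and N: "negligible N"
    and diff: "\<And>\<sigma>. \<sigma> \<in> {0..t} - N \<Longrightarrow> \<gamma> differentiable (at \<sigma>)"
  shows "((\<lambda>\<sigma>. Sup ((\<lambda>\<zeta>. \<zeta> \<bullet> - vector_derivative \<gamma> (at \<sigma>)) ` Dh Df Dg Hxy Hyy \<beta> (\<gamma> \<sigma>)))
    has_integral hfun f Dg Hyy \<beta> (\<gamma> 0) - hfun f Dg Hyy \<beta> (\<gamma> t)) {0..t}"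
proof -
  define \<gamma>' where "\<gamma>' \<sigma> = vector_derivative \<gamma> (at \<sigma>)" for \<sigma>
  have der: "(\<gamma> has_vector_derivative \<gamma>' \<sigma>) (at \<sigma>)" if "\<sigma> \<in> {0..t} - N" for \<sigma>
    using diff[OF that] vector_derivative_works unfolding \<gamma>'_def by blast
  have Phi_der: "((Phi \<circ> \<gamma>) has_vector_derivative DPhi (\<gamma> \<sigma>) (\<gamma>' \<sigma>)) (at \<sigma>)" if "\<sigma> \<in> {0..t} - N" for \<sigma>
    by (rule vector_derivative_diff_chain_within[OF der[OF that] has_derivative_at_withinI[OF Phi_has_derivative]])
  have f_part: "((\<lambda>\<sigma>. Sup ((\<lambda>v. - vector_derivative (Phi \<circ> \<gamma>) (at \<sigma>) \<bullet> v) ` Df ((Phi \<circ> \<gamma>) \<sigma>)))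
      has_integral f ((Phi \<circ> \<gamma>) 0) - f ((Phi \<circ> \<gamma>) t)) {0..t}"
    using abs_cont_on_interval_compose_locally_lipschitz[OF ac Phi_lipschitz] Phi_der
    by (intro is_potential_has_integral_reversed[OF pot Df _ t N]) (auto intro: differentiableI_vector)
  have "abs_cont_on_interval 0 t (penalty \<beta> \<circ> \<gamma>)"
    by (rule abs_cont_on_interval_compose_locally_lipschitz[OF ac penalty_lipschitz])
  moreover have "((penalty \<beta> \<circ> \<gamma>) has_real_derivative grad_penalty \<beta> (\<gamma> \<sigma>) \<bullet> \<gamma>' \<sigma>) (at \<sigma> within {0..t})"
    if "\<sigma> \<in> {0..t} - N" for \<sigma>
    using vector_derivative_diff_chain_within[OF der[OF that] has_derivative_at_withinI[OF penalty_has_derivative]]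
    unfolding has_real_derivative_iff_has_vector_derivative by (rule has_vector_derivative_at_within)
  ultimately have penalty_part: "((\<lambda>\<sigma>. if \<sigma> \<in> N then 0 else grad_penalty \<beta> (\<gamma> \<sigma>) \<bullet> \<gamma>' \<sigma>)
      has_integral (penalty \<beta> \<circ> \<gamma>) t - (penalty \<beta> \<circ> \<gamma>) 0) {0..t}"
    by (rule fundamental_theorem_of_calculus_abs_cont[OF t _ N])
  have h_diff: "f ((Phi \<circ> \<gamma>) 0) - f ((Phi \<circ> \<gamma>) t) - ((penalty \<beta> \<circ> \<gamma>) t - (penalty \<beta> \<circ> \<gamma>) 0)
      = hfun f Dg Hyy \<beta> (\<gamma> 0) - hfun f Dg Hyy \<beta> (\<gamma> t)"
    by (simp add: hfun_def Phi_def penalty_def grad_y_def)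
  from has_integral_diff[OF f_part penalty_part, unfolded h_diff] show ?thesis
  proof (rule has_integral_spike[OF N, rotated])
    fix \<sigma> assume \<sigma>: "\<sigma> \<in> {0..t} - N"
    have "linear (DPhi (\<gamma> \<sigma>))" using Phi_has_derivative has_derivative_linear by blast
    then have "- vector_derivative (Phi \<circ> \<gamma>) (at \<sigma>) = DPhi (\<gamma> \<sigma>) (- \<gamma>' \<sigma>)"
      using vector_derivative_at[OF Phi_der[OF \<sigma>]] by (simp add: linear_neg)
    moreover have "Sup ((\<lambda>\<zeta>. \<zeta> \<bullet> - \<gamma>' \<sigma>) ` Dh Df Dg Hxy Hyy \<beta> (\<gamma> \<sigma>))
        = Sup ((\<lambda>v. DPhi (\<gamma> \<sigma>) (- \<gamma>' \<sigma>) \<bullet> v) ` Df (Phi (\<gamma> \<sigma>))) + grad_penalty \<beta> (\<gamma> \<sigma>) \<bullet> - \<gamma>' \<sigma>"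
      using Df by (intro Sup_Dh_inner_eq) auto
    ultimately show "Sup ((\<lambda>\<zeta>. \<zeta> \<bullet> - vector_derivative \<gamma> (at \<sigma>)) ` Dh Df Dg Hxy Hyy \<beta> (\<gamma> \<sigma>))
        = Sup ((\<lambda>v. - vector_derivative (Phi \<circ> \<gamma>) (at \<sigma>) \<bullet> v) ` Df ((Phi \<circ> \<gamma>) \<sigma>))
          - (if \<sigma> \<in> N then 0 else grad_penalty \<beta> (\<gamma> \<sigma>) \<bullet> \<gamma>' \<sigma>)"
      using \<sigma> unfolding \<gamma>'_def by simp
  qed
qed

end

lemma differential_inclusion_null_exception:
  fixes \<gamma> :: "real \<Rightarrow> 'a::real_normed_vector"
  assumes "AE t in lborel. t > 0 \<longrightarrow> (\<exists>v. (\<gamma> has_vector_derivative v) (at t) \<and> v \<in> uminus ` D (\<gamma> t))"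
  obtains N where "N \<in> null_sets lborel"
    "\<And>t. t \<ge> 0 \<Longrightarrow> t \<notin> N \<Longrightarrow> \<gamma> differentiable (at t) \<and> - vector_derivative \<gamma> (at t) \<in> D (\<gamma> t)"
proof -
  obtain N0 where N0: "{t \<in> space lborel. \<not> (t > 0 \<longrightarrow> (\<exists>v. (\<gamma> has_vector_derivative v) (at t) \<and> v \<in> uminus ` D (\<gamma> t)))} \<subseteq> N0"
    "emeasure lborel N0 = 0" "N0 \<in> sets lborel"
    using assms by (rule AE_E)
  show thesis
  proof
    have "N0 \<in> null_sets lborel" using N0(2,3) by (rule null_setsI)
    moreover have "{0} \<in> null_sets lborel" by (simp add: countable_imp_null_set_lborel)
    ultimately show "N0 \<union> {0} \<in> null_sets lborel" by (rule null_sets.Un)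
    fix t :: real assume t: "t \<ge> 0" "t \<notin> N0 \<union> {0}"
    then have "t > 0" by auto
    have "\<exists>v. (\<gamma> has_vector_derivative v) (at t) \<and> v \<in> uminus ` D (\<gamma> t)"
    proof (rule ccontr)
      assume "\<not> (\<exists>v. (\<gamma> has_vector_derivative v) (at t) \<and> v \<in> uminus ` D (\<gamma> t))"
      then have "t \<in> {t \<in> space lborel. \<not> (t > 0 \<longrightarrow> (\<exists>v. (\<gamma> has_vector_derivative v) (at t) \<and> v \<in> uminus ` D (\<gamma> t)))}"
        using \<open>t > 0\<close> by simp
      then show False using N0(1) t by blast
    qed
    then obtain v where "(\<gamma> has_vector_derivative v) (at t)" "v \<in> uminus ` D (\<gamma> t)" by blast
    then show "\<gamma> differentiable (at t) \<and> - vector_derivative \<gamma> (at t) \<in> D (\<gamma> t)"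
      by (auto simp: vector_derivative_at intro: differentiableI_vector)
  qed
qed

lemma mult_infdist_sq_le:
  assumes "w \<in> S" "\<delta> \<ge> 0" "\<delta> * (norm w)\<^sup>2 \<le> a"
  shows "\<delta> * (infdist 0 S)\<^sup>2 \<le> a"
proof -
  have "infdist 0 S \<le> norm w" using infdist_le[OF assms(1), of 0] by simp
  then have "(infdist 0 S)\<^sup>2 \<le> (norm w)\<^sup>2" by (rule power_mono) (rule infdist_nonneg)
  then show ?thesis using assms(2,3) by (meson mult_left_mono order_trans)
qed

lemma has_integral_imp_nn_integral_bound:
  fixes J q :: "real \<Rightarrow> real"
  assumes J: "(J has_integral I) {a..b}" and N: "N \<in> null_sets lborel"
    and low: "\<And>x. x \<in> {a..b} - N \<Longrightarrow> \<delta> * q x \<le> J x" and q: "\<And>x. 0 \<le> q x" and \<delta>: "\<delta> > 0"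
  shows "ereal \<delta> * enn2ereal (\<integral>\<^sup>+x. ennreal (q x) * indicator {a..b} x \<partial>lborel) \<le> ereal I"
proof -
  define J' where "J' x = (if x \<in> N then 0 else J x / \<delta>)" for x
  have negN: "negligible N" using N negligible_iff_null_sets null_sets_completionI by blast
  have q_le: "q x \<le> J' x" if "x \<in> {a..b} - N" for x
    using low[OF that] \<delta> that unfolding J'_def by (simp add: field_simps)
  have J'_nonneg: "0 \<le> J' x" if "x \<in> {a..b}" for x
    using q_le[of x] q[of x] that unfolding J'_def by (cases "x \<in> N") auto
  have "(J' has_integral I / \<delta>) {a..b}"
    using has_integral_spike[OF negN _ has_integral_divide[OF J, of \<delta>]] unfolding J'_def by simp
  then have "(\<integral>\<^sup>+x. ennreal (J' x) * indicator {a..b} x \<partial>lborel) = ennreal (I / \<delta>)"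
    and I: "I / \<delta> \<ge> 0"
    using J'_nonneg by (auto intro: nn_integral_has_integral_lebesgue' has_integral_nonneg)
  moreover have "(\<integral>\<^sup>+x. ennreal (q x) * indicator {a..b} x \<partial>lborel)
      \<le> (\<integral>\<^sup>+x. ennreal (J' x) * indicator {a..b} x \<partial>lborel)"
    using N q_le by (intro nn_integral_mono_AE) (auto intro!: AE_I'[OF N] ennreal_leI split: split_indicator)
  ultimately have "enn2ereal (\<integral>\<^sup>+x. ennreal (q x) * indicator {a..b} x \<partial>lborel) \<le> ereal (I / \<delta>)"
    using I by (simp add: less_eq_ennreal.rep_eq)
  then have "ereal \<delta> * enn2ereal (\<integral>\<^sup>+x. ennreal (q x) * indicator {a..b} x \<partial>lborel) \<le> ereal \<delta> * ereal (I / \<delta>)"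
    using \<delta> by (intro ereal_mult_left_mono) auto
  then show ?thesis using \<delta> by simp
qed

theorem proposition4p1:
  fixes f :: "(real^'n) \<times> (real^'p) \<Rightarrow> real"
    and Df :: "(real^'n) \<times> (real^'p) \<Rightarrow> ((real^'n) \<times> (real^'p)) set"
    and g :: "(real^'n) \<times> (real^'p) \<Rightarrow> real"
    and Dg :: "(real^'n) \<times> (real^'p) \<Rightarrow> (real^'n) \<times> (real^'p)"
    and Hxy :: "(real^'n) \<times> (real^'p) \<Rightarrow> real^'p^'n"
    and Hyy :: "(real^'n) \<times> (real^'p) \<Rightarrow> real^'p^'p"
    and Mf \<mu> Lg Qg \<beta> \<delta> :: real
    and x :: "nat \<Rightarrow> real^'n" and y :: "nat \<Rightarrow> real^'p"
    and \<eta> :: "nat \<Rightarrow> real"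
    and ux \<xi>x :: "nat \<Rightarrow> real^'n" and uy \<xi>y :: "nat \<Rightarrow> real^'p"
    and D :: "(real^'n) \<times> (real^'p) \<Rightarrow> ((real^'n) \<times> (real^'p)) set"
    and \<gamma> :: "real \<Rightarrow> (real^'n) \<times> (real^'p)"
  assumes consts_pos: "Mf > 0" "\<mu> > 0" "Lg > 0" "Qg > 0"
    and f_lip: "Mf-lipschitz_on UNIV f"
    and g_grad: "\<And>z. (g has_derivative (\<lambda>d. Dg z \<bullet> d)) (at z)"
    and g_twice: "\<And>z. Dg differentiable (at z)"
    and g_hess: "\<And>z. ((\<lambda>w. snd (Dg w)) has_derivative
                       (\<lambda>d. transpose (Hxy z) *v fst d + Hyy z *v snd d)) (at z)"
    and strong_convex: "\<And>z v. \<mu> * (norm v)\<^sup>2 \<le> v \<bullet> (Hyy z *v v)"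
    and grad_lip: "Lg-lipschitz_on UNIV Dg"
    and Hyy_lip: "Qg-lipschitz_on UNIV Hyy"
    and Hxy_lip: "Qg-lipschitz_on UNIV Hxy"
    and Hyy_C1: "\<exists>H'. (\<forall>z. (Hyy has_derivative blinfun_apply (H' z)) (at z)) \<and> continuous_on UNIV H'"
    and Df_cons: "conservative_field Df"
    and f_pot: "is_potential f Df"
    and Df_vals: "\<And>z. convex (Df z) \<and> (\<forall>v\<in>Df z. norm v \<le> Mf)"
    and beta_pos: "\<beta> > 0"
    and delta_pos: "\<delta> > 0"
    and iter_x: "\<And>k. x (Suc k) = x k - \<eta> k *\<^sub>R (ux k + \<xi>x k)"
    and iter_y: "\<And>k. y (Suc k) = y k - \<eta> k *\<^sub>R (uy k + \<xi>y k)"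
    and cond_a: "bdd_above (range (\<lambda>k. norm (x k) + norm (y k)))"
    and cond_b: "\<And>k. \<eta> k > 0" "filterlim (\<lambda>N. \<Sum>k\<le>N. \<eta> k) at_top sequentially"
                "summable (\<lambda>k. (\<eta> k)\<^sup>2)"
    and cond_c: "summable (\<lambda>k. \<eta> k *\<^sub>R \<xi>x k)" "summable (\<lambda>k. \<eta> k *\<^sub>R \<xi>y k)"
    and cond_d: "closed {(z, v). v \<in> D z}" "\<And>z. compact (D z) \<and> convex (D z)"
                "\<And>(kk::nat \<Rightarrow> nat) xt yt. strict_mono kk \<Longrightarrow>
                    ((\<lambda>j. (x (kk j), y (kk j))) \<longlongrightarrow> (xt, yt)) sequentially \<Longrightarrow>
                    (\<forall>\<epsilon>>0. \<forall>\<^sub>F N in sequentially. \<exists>v\<in>D (xt, yt).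
                       dist ((1 / real N) *\<^sub>R (\<Sum>j=1..N. (ux (kk j), uy (kk j)))) v < \<epsilon>)"
    and cond_e: "interior {hfun f Dg Hyy \<beta> z | z. 0 \<in> D z} = {}"
    and cond_f: "\<And>z w. w \<in> D z \<Longrightarrow>
                   Sup ((\<lambda>\<zeta>. \<zeta> \<bullet> w) ` Dh Df Dg Hxy Hyy \<beta> z) \<ge> \<delta> * (norm w)\<^sup>2"
    and gamma_ac: "\<And>T. T \<ge> 0 \<Longrightarrow> abs_cont_on_interval 0 T \<gamma>"
    and gamma_incl: "AE t in lborel. t > 0 \<longrightarrow>
                       (\<exists>v. (\<gamma> has_vector_derivative v) (at t) \<and> v \<in> uminus ` D (\<gamma> t))"
  shows "\<forall>t>0. ereal (hfun f Dg Hyy \<beta> (\<gamma> t) - hfun f Dg Hyy \<beta> (\<gamma> 0))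
            \<le> - (ereal \<delta> * enn2ereal (\<integral>\<^sup>+ \<tau>. ennreal ((infdist 0 (D (\<gamma> \<tau>)))\<^sup>2) * indicator {0..t} \<tau> \<partial>lborel))"
proof (intro allI impI)
  fix t :: real assume t: "t > 0"
  obtain H' where "\<And>z. (Hyy has_derivative blinfun_apply (H' z)) (at z)" "continuous_on UNIV H'"
    using Hyy_C1 by blast
  then interpret strongly_convex_lower_level g Dg Hxy Hyy \<mu> Lg Qg H'
    using consts_pos g_grad g_hess strong_convex grad_lip Hyy_lip by unfold_locales auto
  obtain N where N: "N \<in> null_sets lborel" and incl: "\<And>\<sigma>. \<sigma> \<ge> 0 \<Longrightarrow> \<sigma> \<notin> N \<Longrightarrow>
      \<gamma> differentiable (at \<sigma>) \<and> - vector_derivative \<gamma> (at \<sigma>) \<in> D (\<gamma> \<sigma>)"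
    using differential_inclusion_null_exception[OF gamma_incl] by blast
  have Df: "\<And>z. Df z \<noteq> {} \<and> compact (Df z)" using Df_cons unfolding conservative_field_def by blast
  have "negligible N" using N negligible_iff_null_sets null_sets_completionI by blast
  then have "((\<lambda>\<sigma>. Sup ((\<lambda>\<zeta>. \<zeta> \<bullet> - vector_derivative \<gamma> (at \<sigma>)) ` Dh Df Dg Hxy Hyy \<beta> (\<gamma> \<sigma>)))
      has_integral hfun f Dg Hyy \<beta> (\<gamma> 0) - hfun f Dg Hyy \<beta> (\<gamma> t)) {0..t}"
    using gamma_ac[of t] t incl by (intro hfun_has_integral_reversed[OF f_pot Df]) auto
  then have "ereal \<delta> * enn2ereal (\<integral>\<^sup>+\<tau>. ennreal ((infdist 0 (D (\<gamma> \<tau>)))\<^sup>2) * indicator {0..t} \<tau> \<partial>lborel)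
      \<le> ereal (hfun f Dg Hyy \<beta> (\<gamma> 0) - hfun f Dg Hyy \<beta> (\<gamma> t))"
  proof (rule has_integral_imp_nn_integral_bound[OF _ N _ _ delta_pos])
    fix \<sigma> assume "\<sigma> \<in> {0..t} - N"
    then have w: "- vector_derivative \<gamma> (at \<sigma>) \<in> D (\<gamma> \<sigma>)" using incl by auto
    show "\<delta> * (infdist 0 (D (\<gamma> \<sigma>)))\<^sup>2
        \<le> Sup ((\<lambda>\<zeta>. \<zeta> \<bullet> - vector_derivative \<gamma> (at \<sigma>)) ` Dh Df Dg Hxy Hyy \<beta> (\<gamma> \<sigma>))"
      by (rule mult_infdist_sq_le[OF w less_imp_le[OF delta_pos] cond_f[OF w]])
  qed (rule zero_le_power2)
  then have "- ereal (hfun f Dg Hyy \<beta> (\<gamma> 0) - hfun f Dg Hyy \<beta> (\<gamma> t))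
      \<le> - (ereal \<delta> * enn2ereal (\<integral>\<^sup>+\<tau>. ennreal ((infdist 0 (D (\<gamma> \<tau>)))\<^sup>2) * indicator {0..t} \<tau> \<partial>lborel))"
    by (simp only: ereal_minus_le_minus)
  then show "ereal (hfun f Dg Hyy \<beta> (\<gamma> t) - hfun f Dg Hyy \<beta> (\<gamma> 0))
      \<le> - (ereal \<delta> * enn2ereal (\<integral>\<^sup>+\<tau>. ennreal ((infdist 0 (D (\<gamma> \<tau>)))\<^sup>2) * indicator {0..t} \<tau> \<partial>lborel))"
    by (simp only: uminus_ereal.simps minus_diff_eq)
qed

end
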